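(* For $k=1,2$ let $\mathcal{N}_k:\mathcal{L}(\mathcal{H}_{A_k})\to\mathcal{L}(\mathcal{H}_{B_k})$ be a quantum channel with $\dim\mathcal{H}_{A_k}=\dim\mathcal{H}_{B_k}=d_k$. For a channel $\mathcal{N}:\mathcal{L}(\mathcal{H}_A)\to\mathcal{L}(\mathcal{H}_B)$ with $\dim\mathcal{H}_A=\dim\mathcal{H}_B=d$, define $$\mathcal{O}(\mathcal{N})=\max_{\rho_{RA}}F\big((\mathcal{I}_R\otimes\mathcal{N})(\rho_{RA}),\phi_{RB}\big),$$ where $\mathcal{H}_R$ is a $d$-dimensional reference space, the maximum is over all density operators $\rho_{RA}$ on $\mathcal{H}_R\otimes\mathcal{H}_A$, $\phi_{RB}$ is the projector onto the maximally entangled state $\frac1{\sqrt d}\sum_j|j\rangle_R|j\rangle_B$ (fixed orthonormal bases), and $F(\rho,\sigma)=\|\sqrt\rho\sqrt\sigma\|_1$. Then, with $\mathcal{N}_1\otimes\mathcal{N}_2:\mathcal{L}(\mathcal{H}_{A_1}\otimes\mathcal{H}_{A_2})\to\mathcal{L}(\mathcal{H}_{B_1}\otimes\mathcal{H}_{B_2})$ (of input/output dimension $d_1d_2$), $$\mathcal{O}(\mathcal{N}_1\otimes\mathcal{N}_2)=\mathcal{O}(\mathcal{N}_1)\,\mathcal{O}(\mathcal{N}_2).$$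
   Context: $\mathcal{I}_R$ is the identity map on $\mathcal{L}(\mathcal{H}_R)$ and $\|\cdot\|_1$ is the trace norm. For the tensor product channel the reference space is $\mathcal{H}_{R_1}\otimes\mathcal{H}_{R_2}$ and the maximally entangled state is the one across $R_1R_2$ and $B_1B_2$. *)

theory Defs
  imports Complex_Main "Jordan_Normal_Form.Matrix"
begin

text \<open>Complex matrices (Jordan_Normal_Form 'mat'). Bipartite index convention:
  a basis vector |i>|a> of H_X (dim m) tensor H_Y (dim n) has index i*n + a.\<close>

definition mtrace :: "complex mat \<Rightarrow> complex" where
  "mtrace A = (\<Sum>i<dim_row A. A $$ (i, i))"

definition dagger :: "complex mat \<Rightarrow> complex mat" where
  "dagger A = mat (dim_col A) (dim_row A) (\<lambda>(i, j). cnj (A $$ (j, i)))"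

definition psd :: "complex mat \<Rightarrow> bool" where
  "psd A \<longleftrightarrow> A \<in> carrier_mat (dim_row A) (dim_row A) \<and>
     (\<forall>v \<in> carrier_vec (dim_row A).
        let q = (\<Sum>i<dim_row A. cnj (v $ i) * (A *\<^sub>v v) $ i) in Im q = 0 \<and> Re q \<ge> 0)"

definition density :: "nat \<Rightarrow> complex mat \<Rightarrow> bool" where
  "density n \<rho> \<longleftrightarrow> \<rho> \<in> carrier_mat n n \<and> psd \<rho> \<and> mtrace \<rho> = 1"

definition msqrt :: "complex mat \<Rightarrow> complex mat" where
  "msqrt A = (THE B. psd B \<and> dim_row B = dim_row A \<and> B * B = A)"

definition trace_norm :: "complex mat \<Rightarrow> real" where
  "trace_norm X = Re (mtrace (msqrt (dagger X * X)))"

definition fidelity :: "complex mat \<Rightarrow> complex mat \<Rightarrow> real" where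
  "fidelity \<rho> \<sigma> = trace_norm (msqrt \<rho> * msqrt \<sigma>)"

text \<open>(I_R \<otimes> N)(X) for X on H_R (dim n) \<otimes> H_A (dim din): apply N blockwise.\<close>
definition id_tensor :: "nat \<Rightarrow> nat \<Rightarrow> nat \<Rightarrow> (complex mat \<Rightarrow> complex mat) \<Rightarrow> complex mat \<Rightarrow> complex mat" where
  "id_tensor n din dout N X = mat (n * dout) (n * dout) (\<lambda>(r, c).
      N (mat din din (\<lambda>(a, b). X $$ ((r div dout) * din + a, (c div dout) * din + b)))
        $$ (r mod dout, c mod dout))"

definition quantum_channel :: "nat \<Rightarrow> nat \<Rightarrow> (complex mat \<Rightarrow> complex mat) \<Rightarrow> bool" where
  "quantum_channel din dout N \<longleftrightarrow>
     (\<forall>A \<in> carrier_mat din din. N A \<in> carrier_mat dout dout) \<and>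
     (\<forall>A \<in> carrier_mat din din. \<forall>B \<in> carrier_mat din din. N (A + B) = N A + N B) \<and>
     (\<forall>A \<in> carrier_mat din din. \<forall>c. N (c \<cdot>\<^sub>m A) = c \<cdot>\<^sub>m N A) \<and>
     (\<forall>A \<in> carrier_mat din din. mtrace (N A) = mtrace A) \<and>
     (\<forall>n. \<forall>X \<in> carrier_mat (n * din) (n * din). psd X \<longrightarrow> psd (id_tensor n din dout N X))"

text \<open>Projector onto (1/sqrt d) \<Sum>_j |j>_R |j>_B.\<close>
definition maxent :: "nat \<Rightarrow> complex mat" where
  "maxent d = mat (d * d) (d * d) (\<lambda>(r, c).
      if r div d = r mod d \<and> c div d = c mod d then 1 / of_nat d else 0)"

definition opt_fid :: "nat \<Rightarrow> (complex mat \<Rightarrow> complex mat) \<Rightarrow> real" where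
  "opt_fid d N = Sup {fidelity (id_tensor d d d N \<rho>) (maxent d) | \<rho>. density (d * d) \<rho>}"

definition mat_unit :: "nat \<Rightarrow> nat \<Rightarrow> nat \<Rightarrow> complex mat" where
  "mat_unit d i j = mat d d (\<lambda>(a, b). if a = i \<and> b = j then 1 else 0)"

text \<open>N1 \<otimes> N2 on L(H_A1 \<otimes> H_A2), dims d1, d2; X = \<Sum>_{ij} |i><j| \<otimes> X_ij, mapped to
  \<Sum>_{ij} N1(|i><j|) \<otimes> N2(X_ij) (linear extension of the product map).\<close>
definition tensor_channel :: "nat \<Rightarrow> nat \<Rightarrow> (complex mat \<Rightarrow> complex mat) \<Rightarrow> (complex mat \<Rightarrow> complex mat)
     \<Rightarrow> complex mat \<Rightarrow> complex mat" where
  "tensor_channel d1 d2 N1 N2 X = mat (d1 * d2) (d1 * d2) (\<lambda>(r, c).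
      \<Sum>i<d1. \<Sum>j<d1. N1 (mat_unit d1 i j) $$ (r div d2, c div d2) *
         N2 (mat d2 d2 (\<lambda>(a, b). X $$ (i * d2 + a, j * d2 + b))) $$ (r mod d2, c mod d2))"

end

theory Submission
  imports Defs "Jordan_Normal_Form.Schur_Decomposition" "HOL-Computational_Algebra.Fundamental_Theorem_Algebra"
begin

text \<open>For a pure maximally entangled target, \<open>F(\<sigma>, |\<psi>\<rangle>\<langle>\<psi>|) = \<surd>\<langle>\<psi>|\<sigma>|\<psi>\<rangle>\<close>, and
  \<open>\<langle>\<psi>|(\<I> \<otimes> N)(\<rho>)|\<psi>\<rangle> = tr (\<rho> \<chi>\<^sub>N)\<close> for the positive operator \<open>\<chi>\<^sub>N = (\<I> \<otimes> N\<^sup>\<dagger>)(\<phi>)\<close>.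
  Hence \<open>\<O>(N)\<^sup>2\<close> is the largest eigenvalue \<open>\<lambda>(\<chi>\<^sub>N)\<close>, attained on pure states.
  For the product channel, \<open>\<chi>\<^sub>N\<^sub>1\<^sub>\<otimes>\<^sub>N\<^sub>2\<close> is \<open>\<chi>\<^sub>N\<^sub>1 \<otimes> \<chi>\<^sub>N\<^sub>2\<close> up to a reordering of the
  tensor factors. Product states give \<open>\<O>(N\<^sub>1 \<otimes> N\<^sub>2) \<ge> \<O>(N\<^sub>1) \<O>(N\<^sub>2)\<close>, and the operator
  inequality \<open>A \<otimes> B \<le> \<lambda>(A) \<lambda>(B)\<close> for positive \<open>A\<close>, \<open>B\<close> (via a Gram decomposition of \<open>B\<close>)
  gives the converse.\<close>

section \<open>Conjugate transpose, unitary and Hermitian matrices\<close>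

lemma index_mult_mat_sum:
  assumes "A \<in> carrier_mat n m" "B \<in> carrier_mat m p" "i < n" "j < p"
  shows "(A * B) $$ (i, j) = (\<Sum>k<m. A $$ (i, k) * B $$ (k, j))"
  using assms by (auto simp: scalar_prod_def atLeast0LessThan intro!: sum.cong)

lemma dagger_dims[simp]: "dim_row (dagger A) = dim_col A" "dim_col (dagger A) = dim_row A"
  by (auto simp: dagger_def)

lemma dagger_carrier_iff[simp]: "dagger A \<in> carrier_mat m n \<longleftrightarrow> A \<in> carrier_mat n m"
  unfolding carrier_mat_def by auto

lemma dagger_index[simp]: "i < dim_col A \<Longrightarrow> j < dim_row A \<Longrightarrow> dagger A $$ (i, j) = cnj (A $$ (j, i))"
  by (auto simp: dagger_def)

lemma dagger_dagger[simp]: "dagger (dagger A) = A"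
  by (rule eq_matI) auto

lemma mult_carrier_iff[simp]: "A * B \<in> carrier_mat n m \<longleftrightarrow> dim_row A = n \<and> dim_col B = m"
  unfolding carrier_mat_def by auto

lemma dagger_mult:
  assumes "A \<in> carrier_mat n m" "B \<in> carrier_mat m p"
  shows "dagger (A * B) = dagger B * dagger A"
proof (rule eq_matI)
  fix i j assume "i < dim_row (dagger B * dagger A)" "j < dim_col (dagger B * dagger A)"
  hence i: "i < p" and j: "j < n" using assms by auto
  have "dagger (A * B) $$ (i, j) = (\<Sum>k<m. cnj (A $$ (j, k)) * cnj (B $$ (k, i)))"
    using assms i j index_mult_mat_sum[OF assms j i] by simp
  also have "\<dots> = (dagger B * dagger A) $$ (i, j)"
    using assms i j by (subst index_mult_mat_sum[of _ p m _ n]) (auto intro!: sum.cong)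
  finally show "dagger (A * B) $$ (i, j) = (dagger B * dagger A) $$ (i, j)" .
qed (use assms in auto)

definition unitary :: "nat \<Rightarrow> complex mat \<Rightarrow> bool" where
  "unitary n U \<longleftrightarrow> U \<in> carrier_mat n n \<and> dagger U * U = 1\<^sub>m n \<and> U * dagger U = 1\<^sub>m n"

lemma unitaryI:
  assumes "U \<in> carrier_mat n n" "dagger U * U = 1\<^sub>m n"
  shows "unitary n U"
  using assms mat_mult_left_right_inverse[of "dagger U" n U] unfolding unitary_def by auto

lemma unitary_mult:
  assumes "unitary n U" "unitary n V"
  shows "unitary n (U * V)"
proof -
  have c: "U \<in> carrier_mat n n" "V \<in> carrier_mat n n" "dagger U \<in> carrier_mat n n" "dagger V \<in> carrier_mat n n"
    using assms unfolding unitary_def by auto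
  have e: "dagger U * U = 1\<^sub>m n" "dagger V * V = 1\<^sub>m n" using assms unfolding unitary_def by auto
  have "dagger (U * V) * (U * V) = (dagger V * dagger U) * (U * V)"
    by (simp add: dagger_mult[OF c(1,2)])
  also have "\<dots> = dagger V * (dagger U * (U * V))"
    by (rule assoc_mult_mat[OF c(4) c(3) mult_carrier_mat[OF c(1,2)]])
  also have "dagger U * (U * V) = (dagger U * U) * V"
    by (rule assoc_mult_mat[symmetric, OF c(3) c(1) c(2)])
  finally have "dagger (U * V) * (U * V) = 1\<^sub>m n" using e c by simp
  thus ?thesis using c by (intro unitaryI) auto
qed

definition hermitian :: "nat \<Rightarrow> complex mat \<Rightarrow> bool" where
  "hermitian n A \<longleftrightarrow> A \<in> carrier_mat n n \<and> dagger A = A"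

lemma hermitian_index:
  assumes "hermitian n A" "i < n" "j < n"
  shows "A $$ (i, j) = cnj (A $$ (j, i))"
proof -
  have "A $$ (i, j) = dagger A $$ (i, j)" using assms(1) unfolding hermitian_def by simp
  also have "\<dots> = cnj (A $$ (j, i))" using assms unfolding hermitian_def by (intro dagger_index) auto
  finally show ?thesis .
qed

lemma hermitianI:
  assumes "A \<in> carrier_mat n n" "\<And>i j. i < n \<Longrightarrow> j < n \<Longrightarrow> A $$ (i, j) = cnj (A $$ (j, i))"
  shows "hermitian n A"
  unfolding hermitian_def
proof
  show "dagger A = A"
  proof (rule eq_matI)
    fix i j assume "i < dim_row A" "j < dim_col A"
    thus "dagger A $$ (i, j) = A $$ (i, j)" using assms(1) assms(2)[of i j] by simp
  qed (use assms in auto)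
qed fact

lemma hermitian_congruence:
  assumes "hermitian n A" "V \<in> carrier_mat n k"
  shows "hermitian k (dagger V * A * V)"
proof -
  have A: "A \<in> carrier_mat n n" "dagger A = A" using assms unfolding hermitian_def by auto
  have "dagger (dagger V * A * V) = dagger V * dagger (dagger V * A)"
    using assms A by (subst dagger_mult[of _ k n _ k]) auto
  also have "dagger (dagger V * A) = dagger A * V"
    using assms A by (subst dagger_mult[of _ k n _ n]) auto
  finally have "dagger (dagger V * A * V) = dagger V * A * V"
    using A assms by (simp add: assoc_mult_mat[of "dagger V" k n A n V k])
  thus ?thesis using assms A unfolding hermitian_def by auto
qed

definition diagm :: "nat \<Rightarrow> (nat \<Rightarrow> complex) \<Rightarrow> complex mat" where
  "diagm n e = mat n n (\<lambda>(i, j). if i = j then e i else 0)"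

lemma diagm_carrier[simp]: "diagm n e \<in> carrier_mat n n" "dim_row (diagm n e) = n" "dim_col (diagm n e) = n"
  by (auto simp: diagm_def)

lemma mult_diagm_index:
  assumes "M \<in> carrier_mat k n" "i < k" "j < n"
  shows "(M * diagm n e) $$ (i, j) = M $$ (i, j) * e j"
proof -
  have "(M * diagm n e) $$ (i, j) = (\<Sum>l<n. M $$ (i, l) * diagm n e $$ (l, j))"
    using assms by (subst index_mult_mat_sum[of _ k n _ n]) auto
  also have "\<dots> = (\<Sum>l<n. if l = j then M $$ (i, j) * e j else 0)"
    using assms by (intro sum.cong) (auto simp: diagm_def)
  finally show ?thesis using assms by simp
qed

lemma diagm_mult: "diagm n a * diagm n b = diagm n (\<lambda>i. a i * b i)"
proof (rule eq_matI)
  fix i j assume "i < dim_row (diagm n (\<lambda>i. a i * b i))" "j < dim_col (diagm n (\<lambda>i. a i * b i))"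
  hence ij: "i < n" "j < n" by auto
  show "(diagm n a * diagm n b) $$ (i, j) = diagm n (\<lambda>i. a i * b i) $$ (i, j)"
    unfolding mult_diagm_index[OF diagm_carrier(1) ij] using ij by (simp add: diagm_def)
qed auto

section \<open>The spectral theorem for Hermitian matrices\<close>

lemma cscalar_prod_self:
  "v \<bullet>c v = of_real (\<Sum>i<dim_vec v. (cmod (v $ i))\<^sup>2)"
  by (simp add: scalar_prod_def atLeast0LessThan of_real_sum complex_norm_square del: of_real_power)

lemma unitary_with_first_col:
  assumes u: "u \<in> carrier_vec n" and u1: "u \<bullet>c u = 1"
  shows "\<exists>U. unitary n U \<and> (\<forall>k<n. U $$ (k, 0) = u $ k)"
proof -
  interpret cof_vec_space n "TYPE(complex)" .
  have u0: "u \<noteq> 0\<^sub>v n" using u1 by auto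
  note bc = basis_completion[OF u u0]
  define bs where "bs = basis_completion u"
  have n0: "n > 0" using u0 u by (cases n) auto
  obtain rest where bs_eq: "bs = u # rest" using bc(6,7) n0 unfolding bs_def by (cases "basis_completion u") auto
  define ws where "ws = gram_schmidt n bs"
  note gs = gram_schmidt_result[OF bc(2,4,5)[folded bs_def] ws_def]
  have len: "length ws = n" using gs bc(6) bs_def by simp
  have wsne: "ws \<noteq> []" using len n0 by auto
  have hd: "ws ! 0 = u" using gram_schmidt_hd[OF u, of rest] bs_eq ws_def hd_conv_nth[OF wsne] by simp
  have wc: "\<And>i. i < n \<Longrightarrow> ws ! i \<in> carrier_vec n" using gs(3) len by auto
  define s where "s i = sqrt (\<Sum>k<n. (cmod (ws ! i $ k))\<^sup>2)" for i
  have ss: "ws ! i \<bullet>c ws ! i = of_real ((s i)\<^sup>2)" if "i < n" for i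
    using cscalar_prod_self[of "ws ! i"] wc[OF that] unfolding s_def by (simp add: sum_nonneg)
  have s0: "s i \<noteq> 0" if "i < n" for i
    using corthogonalD[OF gs(2), of i i] len that ss[OF that] by auto
  have "of_real ((s 0)\<^sup>2) = (1::complex)" using ss[OF n0] u1 hd by simp
  hence "(s 0)\<^sup>2 = 1" by (metis of_real_eq_1_iff)
  moreover have "s 0 \<ge> 0" unfolding s_def by (simp add: sum_nonneg)
  ultimately have s_0: "s 0 = 1" by (simp add: power2_eq_1_iff)
  define U where "U = mat n n (\<lambda>(k, i). ws ! i $ k / of_real (s i))"
  have Uc: "U \<in> carrier_mat n n" unfolding U_def by auto
  have "dagger U * U = 1\<^sub>m n"
  proof (rule eq_matI)
    fix i j assume "i < dim_row (1\<^sub>m n)" "j < dim_col (1\<^sub>m n)"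
    hence i: "i < n" and j: "j < n" by auto
    have "(dagger U * U) $$ (i, j) = (\<Sum>k<n. ws ! j $ k * cnj (ws ! i $ k)) / (of_real (s i) * of_real (s j))"
      using Uc i j unfolding U_def
      by (subst index_mult_mat_sum[of _ n n _ n]) (auto simp: sum_divide_distrib mult.commute)
    also have "(\<Sum>k<n. ws ! j $ k * cnj (ws ! i $ k)) = ws ! j \<bullet>c ws ! i"
      using wc[OF i] wc[OF j] by (simp add: scalar_prod_def atLeast0LessThan)
    also have "ws ! j \<bullet>c ws ! i / (of_real (s i) * of_real (s j)) = 1\<^sub>m n $$ (i, j)"
      using ss[OF i] s0[OF i] corthogonalD[OF gs(2), of j i] len i j
      by (cases "i = j") (auto simp: power2_eq_square)
    finally show "(dagger U * U) $$ (i, j) = 1\<^sub>m n $$ (i, j)" .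
  qed (use Uc in auto)
  hence "unitary n U" using Uc by (rule unitaryI[rotated])
  moreover have "\<forall>k<n. U $$ (k, 0) = u $ k" using hd s_0 n0 unfolding U_def by auto
  ultimately show ?thesis by blast
qed

lemma unit_eigenvector_exists:
  fixes A :: "complex mat"
  assumes A: "A \<in> carrier_mat n n" and n0: "0 < n"
  shows "\<exists>u lam. u \<in> carrier_vec n \<and> u \<bullet>c u = 1 \<and> (\<forall>k<n. (\<Sum>l<n. A $$ (k, l) * u $ l) = lam * u $ k)"
proof -
  have "\<not> constant (poly (char_poly A))"
    using degree_monic_char_poly[OF A] n0 unfolding constant_degree by simp
  then obtain lam where "poly (char_poly A) lam = 0" using fundamental_theorem_of_algebra by blast
  hence "eigenvector A (find_eigenvector A lam) lam"
    using eigenvalue_root_char_poly[OF A] find_eigenvector[OF A] by simp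
  then obtain v where v: "v \<in> carrier_vec n" "v \<noteq> 0\<^sub>v n" "A *\<^sub>v v = lam \<cdot>\<^sub>v v"
    unfolding eigenvector_def using A by auto
  define r where "r = sqrt (\<Sum>k<n. (cmod (v $ k))\<^sup>2)"
  have "v \<bullet>c v \<noteq> 0" using v conjugate_square_eq_0_vec by blast
  moreover have "v \<bullet>c v = of_real (\<Sum>k<n. (cmod (v $ k))\<^sup>2)" using cscalar_prod_self[of v] v(1) by (simp only: carrier_vecD)
  ultimately have "(\<Sum>k<n. (cmod (v $ k))\<^sup>2) \<noteq> 0" by (metis of_real_0)
  hence r0: "r > 0" unfolding r_def by (simp add: sum_nonneg order_le_neq_trans)
  define u where "u = (1 / of_real r) \<cdot>\<^sub>v v"
  have uc: "u \<in> carrier_vec n" using v unfolding u_def by auto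
  have "u \<bullet>c u = of_real (\<Sum>k<n. (cmod (v $ k))\<^sup>2 / r\<^sup>2)"
    using cscalar_prod_self[of u] uc v unfolding u_def by (simp add: norm_divide power_divide)
  also have "\<dots> = 1" using r0 unfolding r_def by (simp add: sum_divide_distrib[symmetric] sum_nonneg)
  finally have "u \<bullet>c u = 1" .
  moreover have "(\<Sum>l<n. A $$ (k, l) * u $ l) = lam * u $ k" if "k < n" for k
  proof -
    have "(A *\<^sub>v u) $ k = lam * u $ k" using v that A unfolding u_def by (simp add: mult_mat_vec)
    thus ?thesis using that A uc by (simp add: scalar_prod_def atLeast0LessThan row_def)
  qed
  ultimately show ?thesis using uc by blast
qed

definition block_diag1 :: "nat \<Rightarrow> complex \<Rightarrow> complex mat \<Rightarrow> complex mat" where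
  "block_diag1 m c M = mat (Suc m) (Suc m) (\<lambda>(i, j).
     if i = 0 \<and> j = 0 then c else if i = 0 \<or> j = 0 then 0 else M $$ (i - 1, j - 1))"

lemma block_diag1_carrier[simp]:
  "block_diag1 m c M \<in> carrier_mat (Suc m) (Suc m)"
  "dim_row (block_diag1 m c M) = Suc m" "dim_col (block_diag1 m c M) = Suc m"
  by (simp_all add: block_diag1_def)

lemma block_diag1_mult:
  assumes "A \<in> carrier_mat m m" "B \<in> carrier_mat m m"
  shows "block_diag1 m a A * block_diag1 m b B = block_diag1 m (a * b) (A * B)"
proof (rule eq_matI)
  fix i j assume "i < dim_row (block_diag1 m (a * b) (A * B))" "j < dim_col (block_diag1 m (a * b) (A * B))"
  hence ij: "i < Suc m" "j < Suc m" by (auto simp: block_diag1_def)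
  have "(block_diag1 m a A * block_diag1 m b B) $$ (i, j) =
      (\<Sum>k<Suc m. block_diag1 m a A $$ (i, k) * block_diag1 m b B $$ (k, j))"
    using ij by (intro index_mult_mat_sum) auto
  also have "\<dots> = block_diag1 m a A $$ (i, 0) * block_diag1 m b B $$ (0, j) +
      (\<Sum>k<m. block_diag1 m a A $$ (i, Suc k) * block_diag1 m b B $$ (Suc k, j))"
    by (rule sum.lessThan_Suc_shift)
  also have "\<dots> = block_diag1 m (a * b) (A * B) $$ (i, j)"
    using ij assms by (cases i; cases j) (auto simp: block_diag1_def index_mult_mat_sum[of _ m m _ m] simp del: index_mult_mat)
  finally show "(block_diag1 m a A * block_diag1 m b B) $$ (i, j) = block_diag1 m (a * b) (A * B) $$ (i, j)" .
qed (auto simp: block_diag1_def)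

lemma dagger_block_diag1:
  "M \<in> carrier_mat m m \<Longrightarrow> dagger (block_diag1 m c M) = block_diag1 m (cnj c) (dagger M)"
  by (rule eq_matI) (auto simp: block_diag1_def)

lemma block_diag1_one: "block_diag1 m 1 (1\<^sub>m m) = 1\<^sub>m (Suc m)"
  by (rule eq_matI) (auto simp: block_diag1_def)

lemma block_diag1_diagm:
  "block_diag1 m (e 0) (diagm m (\<lambda>i. e (Suc i))) = diagm (Suc m) e"
  by (rule eq_matI) (auto simp: block_diag1_def diagm_def)

lemma unitary_block_diag1:
  assumes "unitary m V"
  shows "unitary (Suc m) (block_diag1 m 1 V)"
proof (rule unitaryI)
  have "V \<in> carrier_mat m m" "dagger V * V = 1\<^sub>m m" using assms unfolding unitary_def by auto
  thus "dagger (block_diag1 m 1 V) * block_diag1 m 1 V = 1\<^sub>m (Suc m)"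
    by (simp add: dagger_block_diag1 block_diag1_mult block_diag1_one)
qed simp

lemma unitary_conj_first_col:
  assumes A: "A \<in> carrier_mat n n" and U: "unitary n U" and i: "i < n"
    and AU: "\<And>k. k < n \<Longrightarrow> (A * U) $$ (k, 0) = lam * U $$ (k, 0)"
  shows "(dagger U * A * U) $$ (i, 0) = (if i = 0 then lam else 0)"
proof -
  have Uc: "U \<in> carrier_mat n n" "dagger U \<in> carrier_mat n n" "dagger U * U = 1\<^sub>m n"
    using U unfolding unitary_def by auto
  have "dagger U * A * U = dagger U * (A * U)" by (rule assoc_mult_mat[OF Uc(2) A Uc(1)])
  hence "(dagger U * A * U) $$ (i, 0) = (\<Sum>k<n. dagger U $$ (i, k) * (A * U) $$ (k, 0))"
    using i Uc A by (simp add: index_mult_mat_sum[of _ n n _ n] del: index_mult_mat)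
  also have "\<dots> = lam * (\<Sum>k<n. dagger U $$ (i, k) * U $$ (k, 0))"
    by (simp add: AU sum_distrib_left mult.left_commute)
  also have "(\<Sum>k<n. dagger U $$ (i, k) * U $$ (k, 0)) = (dagger U * U) $$ (i, 0)"
    using Uc i by (subst index_mult_mat_sum[of _ n n _ n]) auto
  finally show ?thesis using Uc i by simp
qed

text \<open>Conjugating by a unitary whose first column is a unit eigenvector splits off a \<open>1 \<times> 1\<close> block.\<close>
lemma hermitian_deflation:
  assumes hA: "hermitian (Suc m) A"
  shows "\<exists>U r A3. unitary (Suc m) U \<and> hermitian m A3 \<and> A * U = U * block_diag1 m (of_real r) A3"
proof -
  define n where "n = Suc m"
  have A: "A \<in> carrier_mat n n" using hA unfolding hermitian_def n_def by auto
  obtain u lam where u: "u \<in> carrier_vec n" "u \<bullet>c u = 1"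
      and Au: "\<And>k. k < n \<Longrightarrow> (\<Sum>l<n. A $$ (k, l) * u $ l) = lam * u $ k"
    using unit_eigenvector_exists[OF A] n_def by auto
  obtain U where U: "unitary n U" "\<And>k. k < n \<Longrightarrow> U $$ (k, 0) = u $ k"
    using unitary_with_first_col[OF u] by blast
  have Uc: "U \<in> carrier_mat n n" "dagger U \<in> carrier_mat n n" "dagger U * U = 1\<^sub>m n" "U * dagger U = 1\<^sub>m n"
    using U unfolding unitary_def by auto
  define A' where "A' = dagger U * A * U"
  have A'c: "A' \<in> carrier_mat n n" unfolding A'_def using Uc A by auto
  have hA': "hermitian n A'" unfolding A'_def using hermitian_congruence[OF hA[folded n_def] Uc(1)] .
  have AU: "(A * U) $$ (k, 0) = lam * U $$ (k, 0)" if "k < n" for k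
    using Au[OF that] that U A Uc by (subst index_mult_mat_sum[of _ n n _ n]) (auto simp: n_def)
  have col0: "A' $$ (i, 0) = (if i = 0 then lam else 0)" if "i < n" for i
    unfolding A'_def by (rule unitary_conj_first_col[OF A U(1) that AU])
  have lam_real: "lam = of_real (Re lam)"
    using hermitian_index[OF hA', of 0 0] col0[of 0] by (simp add: n_def complex_eq_iff)
  define A3 where "A3 = mat m m (\<lambda>(i, j). A' $$ (Suc i, Suc j))"
  have hA3: "hermitian m A3"
  proof (rule hermitianI)
    fix i j assume "i < m" "j < m"
    thus "A3 $$ (i, j) = cnj (A3 $$ (j, i))"
      using hermitian_index[OF hA', of "Suc i" "Suc j"] unfolding A3_def by (simp add: n_def)
  qed (simp add: A3_def)
  have "A' = block_diag1 m (of_real (Re lam)) A3"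
  proof (rule eq_matI)
    fix i j assume ij: "i < dim_row (block_diag1 m (of_real (Re lam)) A3)" "j < dim_col (block_diag1 m (of_real (Re lam)) A3)"
    have "A' $$ (0, j) = (if j = 0 then lam else 0)" if "j < n" for j
      using hermitian_index[OF hA' _ that, of 0] col0[OF that] lam_real by (auto simp: n_def)
    thus "A' $$ (i, j) = block_diag1 m (of_real (Re lam)) A3 $$ (i, j)"
      using ij col0 lam_real unfolding block_diag1_def A3_def by (auto simp: n_def)
  qed (use A'c in \<open>auto simp: n_def\<close>)
  moreover have "A * U = U * A'"
  proof -
    have "U * A' = (U * dagger U) * (A * U)" unfolding A'_def
      by (simp only: assoc_mult_mat[OF Uc(2) A Uc(1)] assoc_mult_mat[OF Uc(1) Uc(2) mult_carrier_mat[OF A Uc(1)]])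
    thus ?thesis using Uc A by simp
  qed
  ultimately show ?thesis using U(1) hA3 unfolding n_def by blast
qed

theorem hermitian_spectral:
  "hermitian n A \<Longrightarrow> \<exists>U e. unitary n U \<and> A * U = U * diagm n (\<lambda>i. of_real (e i))"
proof (induction n arbitrary: A)
  case 0
  hence "A * 1\<^sub>m 0 = 1\<^sub>m 0 * diagm 0 (\<lambda>i. of_real 0)" unfolding hermitian_def by (intro eq_matI) auto
  moreover have "unitary 0 (1\<^sub>m 0)" unfolding unitary_def by auto
  ultimately show ?case by (intro exI[of _ "1\<^sub>m 0"] exI[of _ "\<lambda>i::nat. 0::real"]) simp
next
  case (Suc m A)
  obtain U1 r A3 where U1: "unitary (Suc m) U1" "hermitian m A3"
      "A * U1 = U1 * block_diag1 m (of_real r) A3"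
    using hermitian_deflation[OF Suc.prems] by blast
  obtain V e where V: "unitary m V" "A3 * V = V * diagm m (\<lambda>i. of_real (e i))"
    using Suc.IH[OF U1(2)] by blast
  define W where "W = block_diag1 m 1 V"
  define e' where "e' i = (if i = 0 then r else e (i - 1))" for i
  have c: "A \<in> carrier_mat (Suc m) (Suc m)" "U1 \<in> carrier_mat (Suc m) (Suc m)"
      "V \<in> carrier_mat m m" "A3 \<in> carrier_mat m m"
    using Suc.prems U1 V unfolding unitary_def hermitian_def by auto
  have BW: "block_diag1 m (of_real r) A3 * W = W * diagm (Suc m) (\<lambda>i. of_real (e' i))"
    unfolding W_def block_diag1_diagm[symmetric] using c V(2)
    by (simp add: block_diag1_mult e'_def)
  have Wc: "W \<in> carrier_mat (Suc m) (Suc m)" unfolding W_def by simp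
  have "A * (U1 * W) = (A * U1) * W"
    using c Wc by (simp add: assoc_mult_mat[of _ "Suc m" "Suc m" _ "Suc m" _ "Suc m"])
  also have "\<dots> = U1 * (block_diag1 m (of_real r) A3 * W)"
    using c Wc U1(3) by (simp add: assoc_mult_mat[of _ "Suc m" "Suc m" _ "Suc m" _ "Suc m"])
  also have "\<dots> = (U1 * W) * diagm (Suc m) (\<lambda>i. of_real (e' i))"
    using c Wc BW by (simp add: assoc_mult_mat[of _ "Suc m" "Suc m" _ "Suc m" _ "Suc m"])
  finally have "A * (U1 * W) = (U1 * W) * diagm (Suc m) (\<lambda>i. of_real (e' i))" .
  moreover have "unitary (Suc m) (U1 * W)"
    unfolding W_def by (rule unitary_mult[OF U1(1) unitary_block_diag1[OF V(1)]])
  ultimately show ?case by blast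
qed

definition quad_form :: "nat \<Rightarrow> complex mat \<Rightarrow> (nat \<Rightarrow> complex) \<Rightarrow> complex" where
  "quad_form n A f = (\<Sum>i<n. cnj (f i) * (\<Sum>j<n. A $$ (i, j) * f j))"

lemma quad_form_vec:
  assumes "A \<in> carrier_mat n n"
  shows "(\<Sum>i<dim_row A. cnj (vec n f $ i) * (A *\<^sub>v vec n f) $ i) = quad_form n A f"
  using assms unfolding quad_form_def
  by (auto simp: scalar_prod_def atLeast0LessThan row_def intro!: sum.cong)

lemma psd_quad_form:
  assumes "psd A" "A \<in> carrier_mat n n"
  shows "Im (quad_form n A f) = 0" "Re (quad_form n A f) \<ge> 0"
proof -
  have "vec n f \<in> carrier_vec (dim_row A)" using assms by auto
  hence "Im (quad_form n A f) = 0 \<and> Re (quad_form n A f) \<ge> 0"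
    using assms(1) quad_form_vec[OF assms(2), of f] unfolding psd_def Let_def by metis
  thus "Im (quad_form n A f) = 0" "Re (quad_form n A f) \<ge> 0" by auto
qed

lemma psdI:
  assumes "A \<in> carrier_mat n n" "\<And>f. Im (quad_form n A f) = 0 \<and> Re (quad_form n A f) \<ge> 0"
  shows "psd A"
  unfolding psd_def Let_def
proof (intro conjI ballI)
  show "A \<in> carrier_mat (dim_row A) (dim_row A)" using assms by auto
  fix v :: "complex vec" assume v: "v \<in> carrier_vec (dim_row A)"
  hence vv: "v = vec n (\<lambda>i. v $ i)" using assms by auto
  show "Im (\<Sum>i<dim_row A. cnj (v $ i) * (A *\<^sub>v v) $ i) = 0"
    "0 \<le> Re (\<Sum>i<dim_row A. cnj (v $ i) * (A *\<^sub>v v) $ i)"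
    using assms(2)[of "\<lambda>i. v $ i"] quad_form_vec[OF assms(1), of "\<lambda>i. v $ i"] vv by metis+
qed

lemma psd_carrier: "psd A \<Longrightarrow> A \<in> carrier_mat (dim_row A) (dim_row A)"
  unfolding psd_def by auto

lemma sum_delta_mult[simp]:
  fixes c :: complex and i n :: nat
  assumes "i < n"
  shows "(\<Sum>x<n. (if x = i then c else 0) * g x) = c * g i"
proof -
  have "(\<Sum>x<n. (if x = i then c else 0) * g x) = (\<Sum>x<n. if x = i then c * g i else 0)"
    by (intro sum.cong) auto
  also have "\<dots> = c * g i" using assms by (subst sum.delta) auto
  finally show ?thesis .
qed

lemma sum_mult_delta[simp]:
  fixes c :: complex and i n :: nat
  assumes "i < n"
  shows "(\<Sum>x<n. g x * (if x = i then c else 0)) = g i * c"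
  using sum_delta_mult[OF assms, of c g] by (simp add: mult.commute)

lemma cnj_if_zero: "cnj (if P then a else 0) = (if P then cnj a else 0)" by simp

lemma quad_form_two_points:
  assumes "i < n" "j < n"
  shows "quad_form n A (\<lambda>k. (if k = i then a else 0) + (if k = j then b else 0)) =
    cnj a * (a * A $$ (i, i) + b * A $$ (i, j)) + cnj b * (a * A $$ (j, i) + b * A $$ (j, j))"
proof -
  have inner: "(\<Sum>y<n. A $$ (x, y) * ((if y = i then a else 0) + (if y = j then b else 0)))
      = a * A $$ (x, i) + b * A $$ (x, j)" for x
  proof -
    have "(\<Sum>y<n. A $$ (x, y) * ((if y = i then a else 0) + (if y = j then b else 0)))
       = (\<Sum>y<n. (if y = i then a else 0) * A $$ (x, y)) + (\<Sum>y<n. (if y = j then b else 0) * A $$ (x, y))"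
      by (simp add: distrib_left sum.distrib mult.commute)
    thus ?thesis using assms by (simp add: mult.commute)
  qed
  show ?thesis unfolding quad_form_def inner
    using assms by (simp only: cnj_if_zero complex_cnj_add distrib_right sum.distrib sum_delta_mult)
qed

text \<open>Polarization: the quadratic form at \<open>e\<^sub>i\<close>, \<open>e\<^sub>j\<close>, \<open>e\<^sub>i + e\<^sub>j\<close> and \<open>e\<^sub>i + \<i> e\<^sub>j\<close> recovers
  \<open>A\<^sub>i\<^sub>j\<close> and \<open>A\<^sub>j\<^sub>i\<close>.\<close>
lemma psd_hermitian:
  assumes "psd A" "A \<in> carrier_mat n n"
  shows "hermitian n A"
proof (rule hermitianI[OF assms(2)])
  fix i j assume ij: "i < n" "j < n"
  note q = psd_quad_form(1)[OF assms]
  have ii: "Im (A $$ (i, i)) = 0" using q[of "\<lambda>k. (if k = i then 1 else 0) + (if k = j then 0 else 0)"]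
    unfolding quad_form_two_points[OF ij] by simp
  have jj: "Im (A $$ (j, j)) = 0" using q[of "\<lambda>k. (if k = i then 0 else 0) + (if k = j then 1 else 0)"]
    unfolding quad_form_two_points[OF ij] by simp
  have 1: "Im (A $$ (i, j)) + Im (A $$ (j, i)) = 0"
    using q[of "\<lambda>k. (if k = i then 1 else 0) + (if k = j then 1 else 0)"] ii jj
    unfolding quad_form_two_points[OF ij] by simp
  have 2: "Re (A $$ (i, j)) - Re (A $$ (j, i)) = 0"
    using q[of "\<lambda>k. (if k = i then 1 else 0) + (if k = j then \<i> else 0)"] ii jj
    unfolding quad_form_two_points[OF ij] by simp
  show "A $$ (i, j) = cnj (A $$ (j, i))" using 1 2 by (simp add: complex_eq_iff)
qed

lemma gram_quad_form:
  assumes "\<And>x y. x < n \<Longrightarrow> y < n \<Longrightarrow> A $$ (x, y) = (\<Sum>i<k. w i x * cnj (w i y))"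
  shows "quad_form n A f = of_real (\<Sum>i<k. (cmod (\<Sum>y<n. cnj (w i y) * f y))\<^sup>2)"
proof -
  have "quad_form n A f = (\<Sum>x<n. \<Sum>y<n. \<Sum>i<k. (cnj (f x) * w i x) * (cnj (w i y) * f y))"
    unfolding quad_form_def
  proof (intro sum.cong refl)
    fix x assume x: "x \<in> {..<n}"
    have "cnj (f x) * (\<Sum>y<n. A $$ (x, y) * f y) = (\<Sum>y<n. cnj (f x) * (A $$ (x, y) * f y))"
      by (rule sum_distrib_left)
    also have "\<dots> = (\<Sum>y<n. \<Sum>i<k. (cnj (f x) * w i x) * (cnj (w i y) * f y))"
    proof (intro sum.cong refl)
      fix y assume y: "y \<in> {..<n}"
      have "cnj (f x) * (A $$ (x, y) * f y) = (\<Sum>i<k. w i x * cnj (w i y)) * (cnj (f x) * f y)"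
        using x y assms by (simp add: mult_ac)
      also have "\<dots> = (\<Sum>i<k. (cnj (f x) * w i x) * (cnj (w i y) * f y))"
        by (subst sum_distrib_right) (simp add: mult_ac)
      finally show "cnj (f x) * (A $$ (x, y) * f y) = (\<Sum>i<k. (cnj (f x) * w i x) * (cnj (w i y) * f y))" .
    qed
    finally show "cnj (f x) * (\<Sum>y<n. A $$ (x, y) * f y) = (\<Sum>y<n. \<Sum>i<k. (cnj (f x) * w i x) * (cnj (w i y) * f y))" .
  qed
  also have "\<dots> = (\<Sum>x<n. \<Sum>i<k. \<Sum>y<n. (cnj (f x) * w i x) * (cnj (w i y) * f y))"
    by (intro sum.cong refl) (rule sum.swap)
  also have "\<dots> = (\<Sum>i<k. \<Sum>x<n. \<Sum>y<n. (cnj (f x) * w i x) * (cnj (w i y) * f y))"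
    by (rule sum.swap)
  also have "\<dots> = (\<Sum>i<k. (\<Sum>x<n. cnj (f x) * w i x) * (\<Sum>y<n. cnj (w i y) * f y))"
    by (simp only: sum_product)
  also have "\<dots> = (\<Sum>i<k. cnj (\<Sum>y<n. cnj (w i y) * f y) * (\<Sum>y<n. cnj (w i y) * f y))"
    by (simp add: mult.commute)
  also have "\<dots> = of_real (\<Sum>i<k. (cmod (\<Sum>y<n. cnj (w i y) * f y))\<^sup>2)"
    by (simp only: of_real_sum complex_norm_square mult.commute)
  finally show ?thesis .
qed

lemma gram_psd:
  assumes "A \<in> carrier_mat n n"
    "\<And>x y. x < n \<Longrightarrow> y < n \<Longrightarrow> A $$ (x, y) = (\<Sum>i<k. w i x * cnj (w i y))"
  shows "psd A"
  by (rule psdI[OF assms(1)]) (simp add: gram_quad_form[OF assms(2)] sum_nonneg del: of_real_sum)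

lemma unitary_diagm_index:
  assumes "U \<in> carrier_mat n n" "x < n" "y < n"
  shows "(U * diagm n d * dagger U) $$ (x, y) = (\<Sum>i<n. U $$ (x, i) * d i * cnj (U $$ (y, i)))"
proof -
  have UD: "U * diagm n d \<in> carrier_mat n n" "dagger U \<in> carrier_mat n n" using assms by simp_all
  have "(U * diagm n d * dagger U) $$ (x, y) = (\<Sum>i<n. (U * diagm n d) $$ (x, i) * dagger U $$ (i, y))"
    by (rule index_mult_mat_sum[OF UD assms(2,3)])
  also have "\<dots> = (\<Sum>i<n. U $$ (x, i) * d i * cnj (U $$ (y, i)))"
    using assms by (intro sum.cong refl) (simp add: mult_diagm_index[OF assms(1) assms(2)] del: index_mult_mat)
  finally show ?thesis .
qed

lemma unitary_eigen_decomposition: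
  assumes "unitary n U" "A \<in> carrier_mat n n" "A * U = U * diagm n d"
  shows "A = U * diagm n d * dagger U"
proof -
  have c: "U \<in> carrier_mat n n" "dagger U \<in> carrier_mat n n" "U * dagger U = 1\<^sub>m n"
    using assms unfolding unitary_def by auto
  have "A = A * (U * dagger U)" using c assms by simp
  also have "\<dots> = (A * U) * dagger U" by (simp only: assoc_mult_mat[OF assms(2) c(1) c(2)])
  also have "\<dots> = U * diagm n d * dagger U" by (simp only: assms(3))
  finally show ?thesis .
qed

lemma psd_spectral:
  assumes "psd A" "A \<in> carrier_mat n n"
  shows "\<exists>U e. unitary n U \<and> (\<forall>i<n. e i \<ge> 0) \<and>
     (\<forall>x<n. \<forall>y<n. A $$ (x, y) = (\<Sum>i<n. U $$ (x, i) * of_real (e i) * cnj (U $$ (y, i))))"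
proof -
  obtain U e where U: "unitary n U" "A * U = U * diagm n (\<lambda>i. of_real (e i))"
    using hermitian_spectral[OF psd_hermitian[OF assms]] by blast
  have c: "U \<in> carrier_mat n n" "dagger U * U = 1\<^sub>m n" using U unfolding unitary_def by auto
  have ev: "(\<Sum>l<n. A $$ (k, l) * U $$ (l, i)) = U $$ (k, i) * of_real (e i)" if "k < n" "i < n" for k i
    using arg_cong[OF U(2), of "\<lambda>M. M $$ (k, i)"] index_mult_mat_sum[OF assms(2) c(1) that] mult_diagm_index[OF c(1) that]
    by simp
  have "e i \<ge> 0" if i: "i < n" for i
  proof -
    have "quad_form n A (\<lambda>k. U $$ (k, i)) = (\<Sum>k<n. cnj (U $$ (k, i)) * U $$ (k, i)) * of_real (e i)"
      unfolding quad_form_def using i by (simp add: ev sum_distrib_right mult.assoc)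
    also have "(\<Sum>k<n. cnj (U $$ (k, i)) * U $$ (k, i)) = (dagger U * U) $$ (i, i)"
      using c i by (subst index_mult_mat_sum[of _ n n _ n]) auto
    also have "\<dots> = 1" using c i by simp
    finally show ?thesis using psd_quad_form(2)[OF assms, of "\<lambda>k. U $$ (k, i)"] by simp
  qed
  moreover have "\<forall>x<n. \<forall>y<n. A $$ (x, y) = (\<Sum>i<n. U $$ (x, i) * of_real (e i) * cnj (U $$ (y, i)))"
    using unitary_eigen_decomposition[OF U(1) assms(2) U(2)] unitary_diagm_index[OF c(1)] by metis
  ultimately show ?thesis using U by blast
qed

lemma psd_gram:
  assumes "psd A" "A \<in> carrier_mat n n"
  shows "\<exists>w. \<forall>x<n. \<forall>y<n. A $$ (x, y) = (\<Sum>i<n. w i x * cnj (w i y))"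
proof -
  obtain U e where U: "unitary n U" "\<forall>i<n. e i \<ge> 0"
     "\<forall>x<n. \<forall>y<n. A $$ (x, y) = (\<Sum>i<n. U $$ (x, i) * of_real (e i) * cnj (U $$ (y, i)))"
    using psd_spectral[OF assms] by blast
  define w where "w i x = U $$ (x, i) * of_real (sqrt (e i))" for i x
  have "A $$ (x, y) = (\<Sum>i<n. w i x * cnj (w i y))" if "x < n" "y < n" for x y
  proof -
    have "A $$ (x, y) = (\<Sum>i<n. U $$ (x, i) * of_real (e i) * cnj (U $$ (y, i)))" using U(3) that by auto
    also have "\<dots> = (\<Sum>i<n. w i x * cnj (w i y))" unfolding w_def
    proof (intro sum.cong refl)
      fix i assume "i \<in> {..<n}"
      hence "of_real (e i) = (of_real (sqrt (e i)) :: complex) * of_real (sqrt (e i))" using U(2)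
        by (simp flip: of_real_mult)
      thus "U $$ (x, i) * of_real (e i) * cnj (U $$ (y, i)) =
        U $$ (x, i) * of_real (sqrt (e i)) * cnj (U $$ (y, i) * of_real (sqrt (e i)))" by simp
    qed
    finally show ?thesis .
  qed
  thus ?thesis by blast
qed

lemma diagm_cong: "(\<And>i. i < n \<Longrightarrow> a i = b i) \<Longrightarrow> diagm n a = diagm n b"
  by (rule eq_matI) (auto simp: diagm_def)

lemma unitary_diagm_mult:
  assumes "unitary n U"
  shows "(U * diagm n a * dagger U) * (U * diagm n b * dagger U) = U * diagm n (\<lambda>i. a i * b i) * dagger U"
proof -
  have c: "U \<in> carrier_mat n n" "dagger U \<in> carrier_mat n n" "dagger U * U = 1\<^sub>m n"
    using assms unfolding unitary_def by auto
  have da: "diagm n a \<in> carrier_mat n n" "diagm n b \<in> carrier_mat n n" by auto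
  have c2: "U * diagm n a \<in> carrier_mat n n" "U * diagm n b \<in> carrier_mat n n"
    "U * diagm n b * dagger U \<in> carrier_mat n n" "diagm n b * dagger U \<in> carrier_mat n n"
    "diagm n a * diagm n b \<in> carrier_mat n n" using c by auto
  have 1: "dagger U * (U * diagm n b * dagger U) = diagm n b * dagger U"
    by (simp only: assoc_mult_mat[OF c(2) c2(2) c(2), symmetric] assoc_mult_mat[OF c(2) c(1) da(2), symmetric] c(3) left_mult_one_mat[OF da(2)])
  have "(U * diagm n a * dagger U) * (U * diagm n b * dagger U) = (U * diagm n a) * (diagm n b * dagger U)"
    by (simp only: assoc_mult_mat[OF c2(1) c(2) c2(3)] 1)
  also have "\<dots> = U * ((diagm n a * diagm n b) * dagger U)"
    by (simp only: assoc_mult_mat[OF c(1) da(1) c2(4)] assoc_mult_mat[OF da(1) da(2) c(2)])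
  also have "\<dots> = U * diagm n (\<lambda>i. a i * b i) * dagger U"
    by (simp only: diagm_mult assoc_mult_mat[OF c(1) diagm_carrier(1) c(2), symmetric])
  finally show ?thesis .
qed

lemma psd_sqrt_exists:
  assumes "psd A" "A \<in> carrier_mat n n"
  shows "\<exists>B. psd B \<and> B \<in> carrier_mat n n \<and> B * B = A"
proof -
  obtain U e where U: "unitary n U" "\<forall>i<n. e i \<ge> 0"
     "\<forall>x<n. \<forall>y<n. A $$ (x, y) = (\<Sum>i<n. U $$ (x, i) * of_real (e i) * cnj (U $$ (y, i)))"
    using psd_spectral[OF assms] by blast
  have c: "U \<in> carrier_mat n n" using U unfolding unitary_def by auto
  define B where "B = U * diagm n (\<lambda>i. of_real (sqrt (e i))) * dagger U"
  have Bc: "B \<in> carrier_mat n n" unfolding B_def using c by simp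
  have Aeq: "A = U * diagm n (\<lambda>i. of_real (e i)) * dagger U"
    by (rule eq_matI) (use U(3) assms(2) c in \<open>auto simp: unitary_diagm_index simp del: index_mult_mat\<close>)
  have dd: "diagm n (\<lambda>i. (of_real (sqrt (e i)) :: complex) * of_real (sqrt (e i))) = diagm n (\<lambda>i. of_real (e i))"
    by (rule diagm_cong) (use U(2) in \<open>auto simp flip: of_real_mult\<close>)
  have BB: "B * B = A" unfolding B_def unitary_diagm_mult[OF U(1)] Aeq dd ..
  have "psd B"
  proof (rule gram_psd[OF Bc])
    fix x y assume xy: "x < n" "y < n"
    have "B $$ (x, y) = (\<Sum>i<n. U $$ (x, i) * of_real (sqrt (e i)) * cnj (U $$ (y, i)))"
      unfolding B_def by (rule unitary_diagm_index[OF c xy])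
    also have "\<dots> = (\<Sum>i<n. (U $$ (x, i) * of_real (sqrt (sqrt (e i)))) * cnj (U $$ (y, i) * of_real (sqrt (sqrt (e i)))))"
    proof (intro sum.cong refl)
      fix i assume "i \<in> {..<n}"
      hence "(of_real (sqrt (e i)) :: complex) = of_real (sqrt (sqrt (e i))) * of_real (sqrt (sqrt (e i)))" using U(2)
        by (simp flip: of_real_mult)
      thus "U $$ (x, i) * of_real (sqrt (e i)) * cnj (U $$ (y, i)) =
        (U $$ (x, i) * of_real (sqrt (sqrt (e i)))) * cnj (U $$ (y, i) * of_real (sqrt (sqrt (e i))))" by simp
    qed
    finally show "B $$ (x, y) = (\<Sum>i<n. (U $$ (x, i) * of_real (sqrt (sqrt (e i)))) * cnj (U $$ (y, i) * of_real (sqrt (sqrt (e i)))))" .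
  qed
  thus ?thesis using Bc BB by blast
qed

definition mat_app :: "nat \<Rightarrow> complex mat \<Rightarrow> (nat \<Rightarrow> complex) \<Rightarrow> nat \<Rightarrow> complex" where
  "mat_app n M f = (\<lambda>a. \<Sum>b<n. M $$ (a, b) * f b)"

definition inner_prod :: "nat \<Rightarrow> (nat \<Rightarrow> complex) \<Rightarrow> (nat \<Rightarrow> complex) \<Rightarrow> complex" where
  "inner_prod n f g = (\<Sum>a<n. cnj (f a) * g a)"

lemma quad_form_inner_prod: "quad_form n M f = inner_prod n f (mat_app n M f)"
  unfolding quad_form_def inner_prod_def mat_app_def ..

lemma inner_prod_commute: "inner_prod n g f = cnj (inner_prod n f g)"
  unfolding inner_prod_def by (simp add: mult.commute)

lemma mat_app_mult:
  assumes "P \<in> carrier_mat n n" "Q \<in> carrier_mat n n" "a < n"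
  shows "mat_app n (P * Q) x a = mat_app n P (mat_app n Q x) a"
proof -
  have "mat_app n (P * Q) x a = (\<Sum>b<n. (\<Sum>c<n. P $$ (a, c) * Q $$ (c, b)) * x b)"
    unfolding mat_app_def using assms by (intro sum.cong refl) (simp add: index_mult_mat_sum[OF assms(1,2)] del: index_mult_mat)
  also have "\<dots> = (\<Sum>b<n. \<Sum>c<n. P $$ (a, c) * (Q $$ (c, b) * x b))"
    by (simp add: sum_distrib_right mult.assoc)
  also have "\<dots> = (\<Sum>c<n. \<Sum>b<n. P $$ (a, c) * (Q $$ (c, b) * x b))"
    by (rule sum.swap)
  also have "\<dots> = mat_app n P (mat_app n Q x) a"
    unfolding mat_app_def by (simp add: sum_distrib_left)
  finally show ?thesis .
qed

lemma inner_prod_hermitian: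
  assumes "hermitian n P"
  shows "inner_prod n f (mat_app n P g) = inner_prod n (mat_app n P f) g"
proof -
  have "inner_prod n f (mat_app n P g) = (\<Sum>a<n. \<Sum>b<n. cnj (f a) * P $$ (a, b) * g b)"
    unfolding inner_prod_def mat_app_def by (simp add: sum_distrib_left mult.assoc)
  also have "\<dots> = (\<Sum>b<n. \<Sum>a<n. cnj (f a) * P $$ (a, b) * g b)" by (rule sum.swap)
  also have "\<dots> = (\<Sum>b<n. \<Sum>a<n. cnj (P $$ (b, a) * f a) * g b)"
  proof (intro sum.cong refl)
    fix b a assume "b \<in> {..<n}" "a \<in> {..<n}"
    thus "cnj (f a) * P $$ (a, b) * g b = cnj (P $$ (b, a) * f a) * g b"
      using hermitian_index[OF assms, of a b] by (simp add: mult.commute)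
  qed
  also have "\<dots> = inner_prod n (mat_app n P f) g"
    unfolding inner_prod_def mat_app_def by (simp add: sum_distrib_right)
  finally show ?thesis .
qed

lemma quad_form_square:
  assumes "hermitian n P"
  shows "quad_form n (P * P) x = inner_prod n (mat_app n P x) (mat_app n P x)"
proof -
  have Pc: "P \<in> carrier_mat n n" using assms unfolding hermitian_def by auto
  have "quad_form n (P * P) x = inner_prod n x (mat_app n P (mat_app n P x))"
    unfolding quad_form_inner_prod inner_prod_def using mat_app_mult[OF Pc Pc] by (intro sum.cong refl) auto
  also have "\<dots> = inner_prod n (mat_app n P x) (mat_app n P x)" by (rule inner_prod_hermitian[OF assms])
  finally show ?thesis .
qed

lemma inner_prod_expand:
  "inner_prod n (\<lambda>a. u a + c * v a) (\<lambda>a. u a + c * v a) =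
    inner_prod n u u + c * inner_prod n u v + cnj c * inner_prod n v u + cnj c * c * inner_prod n v v"
  unfolding inner_prod_def by (simp add: sum.distrib sum_distrib_left algebra_simps)

lemma inner_prod_cong: "(\<And>a. a < n \<Longrightarrow> f a = f' a) \<Longrightarrow> (\<And>a. a < n \<Longrightarrow> g a = g' a) \<Longrightarrow> inner_prod n f g = inner_prod n f' g'"
  unfolding inner_prod_def by (intro sum.cong) auto

lemma square_eq_shift_quad_form:
  assumes hB: "hermitian n B" and hC: "hermitian n C" and BB: "B * B = C * C"
    and mvB: "\<And>a. a < n \<Longrightarrow> mat_app n B x a = mat_app n C x a + of_real mu * x a"
    and nx: "inner_prod n x x = 1"
  shows "2 * mu * Re (quad_form n C x) + mu\<^sup>2 = 0"
proof -
  have "inner_prod n (mat_app n B x) (mat_app n B x) = inner_prod n (mat_app n C x) (mat_app n C x)"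
    using quad_form_square[OF hB, of x] quad_form_square[OF hC, of x] BB by simp
  moreover have "inner_prod n (mat_app n B x) (mat_app n B x) = inner_prod n (\<lambda>a. mat_app n C x a + of_real mu * x a) (\<lambda>a. mat_app n C x a + of_real mu * x a)"
    by (rule inner_prod_cong) (use mvB in auto)
  ultimately have "inner_prod n (mat_app n C x) x * of_real mu + of_real mu * inner_prod n x (mat_app n C x) + of_real mu * of_real mu * inner_prod n x x = 0"
    unfolding inner_prod_expand by (simp add: algebra_simps)
  hence "cnj (quad_form n C x) * of_real mu + of_real mu * quad_form n C x + of_real (mu\<^sup>2) = 0"
    using nx unfolding quad_form_inner_prod by (simp add: inner_prod_commute[of n "mat_app n C x" x] power2_eq_square)
  hence "Re (cnj (quad_form n C x) * of_real mu + of_real mu * quad_form n C x + of_real (mu\<^sup>2)) = 0" by simp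
  thus ?thesis by (simp add: algebra_simps)
qed

text \<open>If \<open>B\<^sup>2 = C\<^sup>2\<close> and \<open>B x = C x + \<mu> x\<close> for a unit vector \<open>x\<close>, then
  \<open>2 \<mu> \<langle>x, C x\<rangle> + \<mu>\<^sup>2 = 0 = -2 \<mu> \<langle>x, B x\<rangle> + \<mu>\<^sup>2\<close>; positivity of \<open>B\<close> and \<open>C\<close> forces \<open>\<mu> = 0\<close>.\<close>
lemma psd_square_eq_shift_zero:
  assumes pB: "psd B" and Bc: "B \<in> carrier_mat n n" and pC: "psd C" and Cc: "C \<in> carrier_mat n n"
    and BB: "B * B = C * C"
    and Bx: "\<And>a. a < n \<Longrightarrow> mat_app n B x a = mat_app n C x a + of_real mu * x a"
    and nx: "inner_prod n x x = 1"
  shows "mu = 0"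
proof -
  have hB: "hermitian n B" and hC: "hermitian n C" using psd_hermitian assms by auto
  have e1: "2 * mu * Re (quad_form n C x) + mu\<^sup>2 = 0"
    by (rule square_eq_shift_quad_form[OF hB hC BB Bx nx])
  have e2: "2 * (- mu) * Re (quad_form n B x) + (- mu)\<^sup>2 = 0"
    by (rule square_eq_shift_quad_form[OF hC hB BB[symmetric] _ nx]) (simp add: Bx)
  have qB: "Re (quad_form n B x) \<ge> 0" and qC: "Re (quad_form n C x) \<ge> 0"
    using psd_quad_form(2) pB Bc pC Cc by auto
  show "mu = 0"
  proof (rule ccontr)
    assume ne: "mu \<noteq> 0"
    hence sq: "mu\<^sup>2 > 0" by simp
    show False
    proof (cases "mu > 0")
      case True
      hence "2 * mu * Re (quad_form n C x) \<ge> 0" using qC by simp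
      thus False using e1 sq by linarith
    next
      case False
      hence "2 * (- mu) * Re (quad_form n B x) \<ge> 0" using qB by (simp add: mult_nonpos_nonneg)
      thus False using e2 sq by simp
    qed
  qed
qed

lemma psd_sqrt_unique:
  assumes pB: "psd B" and Bc: "B \<in> carrier_mat n n" and pC: "psd C" and Cc: "C \<in> carrier_mat n n"
    and BB: "B * B = C * C"
  shows "B = C"
proof -
  have hB: "hermitian n B" and hC: "hermitian n C" using psd_hermitian assms by auto
  define D where "D = B - C"
  have Dc: "D \<in> carrier_mat n n" unfolding D_def using Bc Cc by auto
  have Dij: "D $$ (i, j) = B $$ (i, j) - C $$ (i, j)" if "i < n" "j < n" for i j
    unfolding D_def using that Bc Cc by auto
  have hD: "hermitian n D"
  proof (rule hermitianI[OF Dc])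
    fix i j assume ij: "i < n" "j < n"
    show "D $$ (i, j) = cnj (D $$ (j, i))"
      unfolding Dij[OF ij] Dij[OF ij(2,1)] using hermitian_index[OF hB ij] hermitian_index[OF hC ij] by simp
  qed
  obtain U mu where U: "unitary n U" "D * U = U * diagm n (\<lambda>i. of_real (mu i))"
    using hermitian_spectral[OF hD] by blast
  have Uc: "U \<in> carrier_mat n n" "dagger U * U = 1\<^sub>m n" using U unfolding unitary_def by auto
  have mu0: "mu i = 0" if i: "i < n" for i
  proof (rule psd_square_eq_shift_zero[OF pB Bc pC Cc BB])
    define x where "x k = U $$ (k, i)" for k
    have "mat_app n D x a = of_real (mu i) * x a" if a: "a < n" for a
      using arg_cong[OF U(2), of "\<lambda>M. M $$ (a, i)"] index_mult_mat_sum[OF Dc Uc(1) a i] mult_diagm_index[OF Uc(1) a i]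
      unfolding mat_app_def x_def by (simp add: mult.commute del: index_mult_mat)
    moreover have "mat_app n D x a = mat_app n B x a - mat_app n C x a" if a: "a < n" for a
      unfolding mat_app_def using a by (simp add: Dij left_diff_distrib sum_subtractf)
    ultimately show "mat_app n B x a = mat_app n C x a + of_real (mu i) * x a" if "a < n" for a
      using that by (simp add: algebra_simps)
    have "inner_prod n x x = (dagger U * U) $$ (i, i)"
      unfolding inner_prod_def x_def using Uc i by (subst index_mult_mat_sum[of _ n n _ n]) auto
    thus "inner_prod n x x = 1" using Uc i by simp
  qed
  have Deq: "D = U * diagm n (\<lambda>i. of_real (mu i)) * dagger U" by (rule unitary_eigen_decomposition[OF U(1) Dc U(2)])
  have "D $$ (a, b) = 0" if "a < n" "b < n" for a b
    using unitary_diagm_index[OF Uc(1) that, of "\<lambda>i. of_real (mu i)"] mu0 Deq by simp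
  thus "B = C" using Dij Bc Cc by (intro eq_matI) auto
qed

lemma msqrt_eq:
  assumes "psd A" "A \<in> carrier_mat n n" "psd B" "B \<in> carrier_mat n n" "B * B = A"
  shows "msqrt A = B"
  unfolding msqrt_def
proof (rule the_equality)
  show "psd B \<and> dim_row B = dim_row A \<and> B * B = A" using assms by auto
  fix B' assume B': "psd B' \<and> dim_row B' = dim_row A \<and> B' * B' = A"
  hence "B' \<in> carrier_mat n n" using psd_carrier[of B'] assms(2) by auto
  thus "B' = B" using psd_sqrt_unique[of B' n B] B' assms by auto
qed

lemma msqrt:
  assumes "psd A" "A \<in> carrier_mat n n"
  shows "psd (msqrt A)" "msqrt A \<in> carrier_mat n n" "msqrt A * msqrt A = A"
proof -
  obtain B where "psd B" "B \<in> carrier_mat n n" "B * B = A" using psd_sqrt_exists[OF assms] by blast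
  moreover have "msqrt A = B" using msqrt_eq[OF assms] calculation by auto
  ultimately show "psd (msqrt A)" "msqrt A \<in> carrier_mat n n" "msqrt A * msqrt A = A" by auto
qed

definition outer :: "nat \<Rightarrow> (nat \<Rightarrow> complex) \<Rightarrow> complex mat" where
  "outer n f = mat n n (\<lambda>(i, j). f i * cnj (f j))"

lemma outer_carrier[simp]: "outer n f \<in> carrier_mat n n" "dim_row (outer n f) = n" "dim_col (outer n f) = n"
  by (auto simp: outer_def)

lemma outer_index[simp]: "i < n \<Longrightarrow> j < n \<Longrightarrow> outer n f $$ (i, j) = f i * cnj (f j)"
  by (simp add: outer_def)

lemma outer_psd: "psd (outer n f)"
  by (rule gram_psd[OF outer_carrier(1), where k="1::nat" and w="\<lambda>_. f"]) simp

lemma dagger_outer: "dagger (outer n f) = outer n f"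
  by (rule eq_matI) (auto simp: mult.commute)

lemma mtrace_outer: "mtrace (outer n f) = inner_prod n f f"
  unfolding mtrace_def inner_prod_def by (simp add: mult.commute)

lemma outer_mult_outer: "outer n f * outer n f = inner_prod n f f \<cdot>\<^sub>m outer n f"
proof (rule eq_matI)
  fix i j assume "i < dim_row (inner_prod n f f \<cdot>\<^sub>m outer n f)" "j < dim_col (inner_prod n f f \<cdot>\<^sub>m outer n f)"
  hence ij: "i < n" "j < n" by auto
  have "(outer n f * outer n f) $$ (i, j) = (\<Sum>k<n. f i * cnj (f k) * (f k * cnj (f j)))"
    using ij by (subst index_mult_mat_sum[of _ n n _ n]) auto
  also have "\<dots> = inner_prod n f f * (f i * cnj (f j))"
    unfolding inner_prod_def by (simp add: sum_distrib_left sum_distrib_right mult_ac)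
  finally show "(outer n f * outer n f) $$ (i, j) = (inner_prod n f f \<cdot>\<^sub>m outer n f) $$ (i, j)" using ij by simp
qed auto

lemma inner_prod_scale: "inner_prod n (\<lambda>i. of_real t * f i) (\<lambda>i. of_real t * f i) = of_real (t\<^sup>2) * inner_prod n f f"
  unfolding inner_prod_def by (simp add: sum_distrib_left mult_ac power2_eq_square)

lemma outer_mult_mult_outer:
  assumes M: "M \<in> carrier_mat n n" and im: "Im (quad_form n M f) = 0" and re: "Re (quad_form n M f) \<ge> 0"
  shows "outer n f * M * outer n f = outer n (\<lambda>i. of_real (sqrt (Re (quad_form n M f))) * f i)"
proof (rule eq_matI)
  fix i j assume "i < dim_row (outer n (\<lambda>i. of_real (sqrt (Re (quad_form n M f))) * f i))"
    "j < dim_col (outer n (\<lambda>i. of_real (sqrt (Re (quad_form n M f))) * f i))"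
  hence ij: "i < n" "j < n" by auto
  have c1: "outer n f * M \<in> carrier_mat n n" using M by simp
  have e1: "(outer n f * M) $$ (i, l) = f i * (\<Sum>k<n. cnj (f k) * M $$ (k, l))" if "l < n" for l
    using ij that M by (subst index_mult_mat_sum[of _ n n _ n]) (auto simp: sum_distrib_left mult_ac)
  have "(outer n f * M * outer n f) $$ (i, j) = (\<Sum>l<n. (outer n f * M) $$ (i, l) * (f l * cnj (f j)))"
    using ij c1 by (subst index_mult_mat_sum[of _ n n _ n]) auto
  also have "\<dots> = (\<Sum>l<n. f i * (\<Sum>k<n. cnj (f k) * M $$ (k, l)) * (f l * cnj (f j)))"
    by (intro sum.cong refl) (simp add: e1)
  also have "\<dots> = f i * cnj (f j) * (\<Sum>l<n. \<Sum>k<n. cnj (f k) * M $$ (k, l) * f l)"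
    by (simp add: sum_distrib_left sum_distrib_right mult_ac)
  also have "(\<Sum>l<n. \<Sum>k<n. cnj (f k) * M $$ (k, l) * f l) = quad_form n M f"
    unfolding quad_form_def by (subst sum.swap) (simp add: sum_distrib_left mult_ac)
  also have "quad_form n M f = of_real (Re (quad_form n M f))" using im by (simp add: complex_eq_iff)
  also have "\<dots> = of_real (sqrt (Re (quad_form n M f))) * of_real (sqrt (Re (quad_form n M f)))"
    using re by (simp flip: of_real_mult)
  finally show "(outer n f * M * outer n f) $$ (i, j) = outer n (\<lambda>i. of_real (sqrt (Re (quad_form n M f))) * f i) $$ (i, j)"
    using ij by (simp add: mult_ac)
qed auto

lemma msqrt_outer_scaled:
  assumes nf: "inner_prod n f f = 1" and r0: "r \<ge> 0"
  shows "msqrt (outer n (\<lambda>i. of_real (sqrt r) * f i)) = outer n (\<lambda>i. of_real (sqrt (sqrt r)) * f i)"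
proof -
  define h where "h i = of_real (sqrt (sqrt r)) * f i" for i
  have ih: "inner_prod n h h = of_real (sqrt r)" unfolding h_def inner_prod_scale nf using r0 by simp
  have "outer n h * outer n h = outer n (\<lambda>i. of_real (sqrt r) * f i)"
  proof (rule eq_matI)
    fix i j assume "i < dim_row (outer n (\<lambda>i. of_real (sqrt r) * f i))" "j < dim_col (outer n (\<lambda>i. of_real (sqrt r) * f i))"
    hence ij: "i < n" "j < n" by auto
    have "(of_real (sqrt r) :: complex) * (of_real (sqrt (sqrt r)) * of_real (sqrt (sqrt r))) = of_real (sqrt r) * of_real (sqrt r)"
      using r0 by (simp flip: of_real_mult)
    thus "(outer n h * outer n h) $$ (i, j) = outer n (\<lambda>i. of_real (sqrt r) * f i) $$ (i, j)"
      unfolding outer_mult_outer ih using ij unfolding h_def by (simp add: mult_ac)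
  qed auto
  thus ?thesis unfolding h_def by (intro msqrt_eq[OF outer_psd outer_carrier(1) outer_psd outer_carrier(1)])
qed

text \<open>With \<open>B = \<surd>X\<close> and \<open>P = |f\<rangle>\<langle>f|\<close>: \<open>(B P)\<^sup>\<dagger> (B P) = P X P = \<langle>f|X|f\<rangle> P\<close>.\<close>
lemma fidelity_outer:
  assumes pX: "psd X" and Xc: "X \<in> carrier_mat n n" and nf: "inner_prod n f f = 1"
  shows "fidelity X (outer n f) = sqrt (Re (quad_form n X f))"
proof -
  define P where "P = outer n f"
  define B where "B = msqrt X"
  define r where "r = Re (quad_form n X f)"
  have Pc: "P \<in> carrier_mat n n" unfolding P_def by simp
  have sqrtP: "msqrt P = P" using msqrt_outer_scaled[OF nf, of 1] unfolding P_def by simp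
  have B: "psd B" "B \<in> carrier_mat n n" "B * B = X" using msqrt[OF pX Xc] unfolding B_def by auto
  have dB: "dagger B = B" using psd_hermitian[OF B(1,2)] unfolding hermitian_def by auto
  have "dagger (B * P) * (B * P) = (P * B) * (B * P)"
    using dagger_mult[OF B(2) Pc] dagger_outer dB unfolding P_def by simp
  also have "\<dots> = P * X * P" using B Pc by (simp flip: B(3))
  also have "\<dots> = outer n (\<lambda>i. of_real (sqrt r) * f i)"
    using psd_quad_form[OF pX Xc] unfolding P_def r_def by (intro outer_mult_mult_outer[OF Xc]) auto
  finally have "fidelity X P = Re (mtrace (outer n (\<lambda>i. of_real (sqrt (sqrt r)) * f i)))"
    unfolding fidelity_def trace_norm_def sqrtP B_def[symmetric]
    using msqrt_outer_scaled[OF nf] psd_quad_form[OF pX Xc] r_def by simp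
  also have "\<dots> = sqrt r" unfolding mtrace_outer inner_prod_scale nf using r_def psd_quad_form[OF pX Xc] by simp
  finally show ?thesis unfolding P_def r_def .
qed

definition linear_on :: "nat \<Rightarrow> nat \<Rightarrow> (complex mat \<Rightarrow> complex mat) \<Rightarrow> bool" where
  "linear_on din dout N \<longleftrightarrow>
     (\<forall>A \<in> carrier_mat din din. N A \<in> carrier_mat dout dout) \<and>
     (\<forall>A \<in> carrier_mat din din. \<forall>B \<in> carrier_mat din din. N (A + B) = N A + N B) \<and>
     (\<forall>A \<in> carrier_mat din din. \<forall>c. N (c \<cdot>\<^sub>m A) = c \<cdot>\<^sub>m N A)"

lemma quantum_channel_linear_on: "quantum_channel din dout N \<Longrightarrow> linear_on din dout N"
  unfolding quantum_channel_def linear_on_def by blast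

lemma mat_unit_carrier[simp]: "mat_unit d i j \<in> carrier_mat d d"
  by (simp add: mat_unit_def)

lemma linear_on_zero:
  assumes "linear_on din dout N" "p < dout" "q < dout"
  shows "N (0\<^sub>m din din) $$ (p, q) = 0"
proof -
  have Nc: "N (0\<^sub>m din din) \<in> carrier_mat dout dout" using assms unfolding linear_on_def by auto
  have "(0\<^sub>m din din :: complex mat) = 0 \<cdot>\<^sub>m 0\<^sub>m din din" by (rule eq_matI) auto
  hence "N (0\<^sub>m din din) = 0 \<cdot>\<^sub>m N (0\<^sub>m din din)" using assms unfolding linear_on_def
    by (metis zero_carrier_mat)
  hence "N (0\<^sub>m din din) $$ (p, q) = 0 * N (0\<^sub>m din din) $$ (p, q)" using Nc assms
    by (metis carrier_matD(1) carrier_matD(2) index_smult_mat(1))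
  thus ?thesis by simp
qed

lemma linear_on_expand:
  assumes L: "linear_on din dout N" and X: "X \<in> carrier_mat din din" and pq: "p < dout" "q < dout"
  shows "N X $$ (p, q) = (\<Sum>a<din. \<Sum>b<din. X $$ (a, b) * N (mat_unit din a b) $$ (p, q))"
proof -
  define part where "part P = mat din din (\<lambda>ab. if ab \<in> P then X $$ ab else 0)" for P
  have Nc: "\<And>A. A \<in> carrier_mat din din \<Longrightarrow> N A \<in> carrier_mat dout dout"
    and Nadd: "\<And>A B. A \<in> carrier_mat din din \<Longrightarrow> B \<in> carrier_mat din din \<Longrightarrow> N (A + B) = N A + N B"
    and Nsmult: "\<And>A c. A \<in> carrier_mat din din \<Longrightarrow> N (c \<cdot>\<^sub>m A) = c \<cdot>\<^sub>m N A"
    using L unfolding linear_on_def by auto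
  have parts: "N (part P) $$ (p, q) = (\<Sum>(a, b)\<in>P. X $$ (a, b) * N (mat_unit din a b) $$ (p, q))"
    if "finite P" for P
    using that
  proof induction
    case empty
    have "part {} = 0\<^sub>m din din" unfolding part_def by auto
    thus ?case using linear_on_zero[OF L pq] by simp
  next
    case (insert ab P)
    obtain a b where ab: "ab = (a, b)" by fastforce
    have "part (insert ab P) = part P + X $$ ab \<cdot>\<^sub>m mat_unit din a b"
      using insert(2) unfolding part_def mat_unit_def ab by (auto intro!: eq_matI)
    hence "N (part (insert ab P)) = N (part P) + X $$ ab \<cdot>\<^sub>m N (mat_unit din a b)"
      by (simp add: Nadd Nsmult part_def)
    thus ?case
      using insert Nc[of "part P"] Nc[OF mat_unit_carrier, of a b] pq unfolding ab
      by (simp add: part_def)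
  qed
  have "part ({..<din} \<times> {..<din}) = X" using X unfolding part_def by (auto intro!: eq_matI)
  thus ?thesis using parts[of "{..<din} \<times> {..<din}"] by (simp add: sum.cartesian_product)
qed

lemma mult_add_less_mult:
  fixes a b m n :: nat
  assumes "a < m" "b < n"
  shows "a * n + b < m * n"
proof -
  have "a * n + b < Suc a * n" using assms by simp
  also have "\<dots> \<le> m * n" using assms by (intro mult_le_mono1) simp
  finally show ?thesis .
qed

lemma sum_mult_split:
  fixes m n :: nat
  shows "(\<Sum>r<m * n. g r) = (\<Sum>j<m. \<Sum>b<n. g (j * n + b))"
proof -
  have "(\<Sum>b<n. g (j * n + b)) = sum g {j * n..<j * n + n}" for j
    using sum.atLeastLessThan_shift_0[of g "j * n" "j * n + n"] by (simp add: atLeast0LessThan comp_def)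
  thus ?thesis by (simp add: sum.nat_group[symmetric])
qed

definition maxent_vec :: "nat \<Rightarrow> nat \<Rightarrow> complex" where
  "maxent_vec d r = (if r div d = r mod d then of_real (1 / sqrt (real d)) else 0)"

lemma maxent_vec_digits:
  "b < d \<Longrightarrow> maxent_vec d (k * d + b) = (if k = b then of_real (1 / sqrt (real d)) else 0)"
  unfolding maxent_vec_def by simp

lemma inv_sqrt_square: "d > 0 \<Longrightarrow> (of_real (1 / sqrt (real d)) :: complex) * of_real (1 / sqrt (real d)) = 1 / of_nat d"
  by (simp flip: of_real_mult add: of_real_divide)

lemma maxent_eq_outer:
  assumes "d > 0"
  shows "maxent d = outer (d * d) (maxent_vec d)"
proof -
  have "complex_of_real (sqrt (real d)) * complex_of_real (sqrt (real d)) = of_nat d"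
    by (simp flip: of_real_mult)
  thus ?thesis using assms by (intro eq_matI) (auto simp: maxent_def maxent_vec_def inv_sqrt_square)
qed

lemma inner_prod_maxent_vec:
  assumes "d > 0"
  shows "inner_prod (d * d) (maxent_vec d) (maxent_vec d) = 1"
proof -
  have "inner_prod (d * d) (maxent_vec d) (maxent_vec d) = (\<Sum>j<d. \<Sum>b<d. if j = b then 1 / of_nat d else 0)"
    unfolding inner_prod_def sum_mult_split
    using inv_sqrt_square[OF assms] by (intro sum.cong refl) (simp add: maxent_vec_digits)
  thus ?thesis using assms by simp
qed

definition block :: "nat \<Rightarrow> complex mat \<Rightarrow> nat \<Rightarrow> nat \<Rightarrow> complex mat" where
  "block d X j k = mat d d (\<lambda>(a, b). X $$ (j * d + a, k * d + b))"

lemma block_carrier[simp]: "block d X j k \<in> carrier_mat d d"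
  by (simp add: block_def)

lemma id_tensor_index:
  assumes "j < n" "k < n" "b < dout" "b' < dout"
  shows "id_tensor n din dout N X $$ (j * dout + b, k * dout + b') = N (block din X j k) $$ (b, b')"
  using assms mult_add_less_mult[of j n b dout] mult_add_less_mult[of k n b' dout]
  unfolding id_tensor_def block_def by simp

section \<open>The optimal fidelity as a quadratic-form problem\<close>

definition trace_prod :: "nat \<Rightarrow> complex mat \<Rightarrow> complex mat \<Rightarrow> complex" where
  "trace_prod n R M = (\<Sum>x<n. \<Sum>y<n. R $$ (x, y) * M $$ (y, x))"

text \<open>\<open>(\<I>\<^sub>R \<otimes> N\<^sup>\<dagger>)(\<phi>)\<close>, the image of the maximally entangled projector under the adjoint map
  (the entry at \<open>(j, a'), (k, a)\<close> is \<open>\<langle>k|N(|a\<rangle>\<langle>a'|)|j\<rangle> / d\<close>); it satisfies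
  \<open>\<langle>\<psi>|(\<I>\<^sub>R \<otimes> N)(X)|\<psi>\<rangle> = tr (X \<chi>)\<close>.\<close>
definition dual_maxent :: "nat \<Rightarrow> (complex mat \<Rightarrow> complex mat) \<Rightarrow> complex mat" where
  "dual_maxent d N = mat (d * d) (d * d)
     (\<lambda>(y, x). N (mat_unit d (x mod d) (y mod d)) $$ (x div d, y div d) / of_nat d)"

lemma dual_maxent_carrier[simp]: "dual_maxent d N \<in> carrier_mat (d * d) (d * d)"
  by (simp add: dual_maxent_def)

lemma dual_maxent_digits:
  assumes "j < d" "k < d" "a < d" "b < d"
  shows "dual_maxent d N $$ (k * d + b, j * d + a) = N (mat_unit d a b) $$ (j, k) / of_nat d"
  using assms mult_add_less_mult[of j d a d] mult_add_less_mult[of k d b d]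
  unfolding dual_maxent_def by simp

lemma quad_form_maxent_vec:
  assumes d0: "d > 0"
  shows "quad_form (d * d) Y (maxent_vec d) = (\<Sum>j<d. \<Sum>k<d. Y $$ (j * d + j, k * d + k)) / of_nat d"
proof -
  define c where "c = (of_real (1 / sqrt (real d)) :: complex)"
  have row: "(\<Sum>r<d * d. Y $$ (x, r) * maxent_vec d r) = c * (\<Sum>k<d. Y $$ (x, k * d + k))" for x
  proof -
    have "(\<Sum>r<d * d. Y $$ (x, r) * maxent_vec d r) = (\<Sum>k<d. \<Sum>b<d. Y $$ (x, k * d + b) * maxent_vec d (k * d + b))"
      by (rule sum_mult_split)
    also have "\<dots> = (\<Sum>k<d. Y $$ (x, k * d + k) * c)"
    proof (intro sum.cong refl)
      fix k assume k: "k \<in> {..<d}"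
      have "(\<Sum>b<d. Y $$ (x, k * d + b) * maxent_vec d (k * d + b)) = (\<Sum>b<d. if k = b then Y $$ (x, k * d + b) * c else 0)"
        by (intro sum.cong refl) (simp add: maxent_vec_digits c_def)
      also have "\<dots> = Y $$ (x, k * d + k) * c" using k by simp
      finally show "(\<Sum>b<d. Y $$ (x, k * d + b) * maxent_vec d (k * d + b)) = Y $$ (x, k * d + k) * c" .
    qed
    finally show ?thesis by (simp add: sum_distrib_left mult.commute)
  qed
  have "quad_form (d * d) Y (maxent_vec d) =
      (\<Sum>j<d. \<Sum>a<d. cnj (maxent_vec d (j * d + a)) * (c * (\<Sum>k<d. Y $$ (j * d + a, k * d + k))))"
    unfolding quad_form_def row by (rule sum_mult_split)
  also have "\<dots> = (\<Sum>j<d. cnj c * (c * (\<Sum>k<d. Y $$ (j * d + j, k * d + k))))"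
  proof (intro sum.cong refl)
    fix j assume j: "j \<in> {..<d}"
    have "(\<Sum>a<d. cnj (maxent_vec d (j * d + a)) * (c * (\<Sum>k<d. Y $$ (j * d + a, k * d + k))))
       = (\<Sum>a<d. if j = a then cnj c * (c * (\<Sum>k<d. Y $$ (j * d + a, k * d + k))) else 0)"
      by (intro sum.cong refl) (simp add: maxent_vec_digits c_def)
    also have "\<dots> = cnj c * (c * (\<Sum>k<d. Y $$ (j * d + j, k * d + k)))" using j by simp
    finally show "(\<Sum>a<d. cnj (maxent_vec d (j * d + a)) * (c * (\<Sum>k<d. Y $$ (j * d + a, k * d + k))))
       = cnj c * (c * (\<Sum>k<d. Y $$ (j * d + j, k * d + k)))" .
  qed
  also have "\<dots> = (\<Sum>j<d. \<Sum>k<d. Y $$ (j * d + j, k * d + k)) / of_nat d"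
    using inv_sqrt_square[OF d0] unfolding c_def by (simp add: sum_distrib_left sum_divide_distrib)
  finally show ?thesis .
qed

lemma maxent_quad_form_id_tensor:
  assumes L: "linear_on d d N" and d0: "d > 0"
  shows "quad_form (d * d) (id_tensor d d d N X) (maxent_vec d) = trace_prod (d * d) X (dual_maxent d N)"
proof -
  have "quad_form (d * d) (id_tensor d d d N X) (maxent_vec d) = (\<Sum>j<d. \<Sum>k<d. N (block d X j k) $$ (j, k) / of_nat d)"
    unfolding quad_form_maxent_vec[OF d0] by (simp add: id_tensor_index sum_divide_distrib)
  also have "\<dots> = (\<Sum>j<d. \<Sum>k<d. \<Sum>a<d. \<Sum>b<d. X $$ (j * d + a, k * d + b) * (N (mat_unit d a b) $$ (j, k) / of_nat d))"
  proof (intro sum.cong refl)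
    fix j k assume jk: "j \<in> {..<d}" "k \<in> {..<d}"
    show "N (block d X j k) $$ (j, k) / of_nat d = (\<Sum>a<d. \<Sum>b<d. X $$ (j * d + a, k * d + b) * (N (mat_unit d a b) $$ (j, k) / of_nat d))"
      using linear_on_expand[OF L block_carrier, of j k X j k] jk
      by (simp add: sum_divide_distrib block_def mult.assoc)
  qed
  also have "\<dots> = (\<Sum>j<d. \<Sum>a<d. \<Sum>k<d. \<Sum>b<d. X $$ (j * d + a, k * d + b) * dual_maxent d N $$ (k * d + b, j * d + a))"
  proof (rule sum.cong[OF refl])
    fix j assume j: "j \<in> {..<d}"
    show "(\<Sum>k<d. \<Sum>a<d. \<Sum>b<d. X $$ (j * d + a, k * d + b) * (N (mat_unit d a b) $$ (j, k) / of_nat d)) =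
       (\<Sum>a<d. \<Sum>k<d. \<Sum>b<d. X $$ (j * d + a, k * d + b) * dual_maxent d N $$ (k * d + b, j * d + a))"
      by (subst sum.swap) (use j in \<open>auto simp: dual_maxent_digits intro!: sum.cong\<close>)
  qed
  also have "\<dots> = trace_prod (d * d) X (dual_maxent d N)"
    by (simp add: sum_mult_split trace_prod_def)
  finally show ?thesis .
qed

lemma trace_prod_gram:
  assumes "\<And>x y. x < n \<Longrightarrow> y < n \<Longrightarrow> R $$ (x, y) = (\<Sum>i\<in>I. w i x * cnj (w i y))"
  shows "trace_prod n R M = (\<Sum>i\<in>I. quad_form n M (w i))"
proof -
  have "trace_prod n R M = (\<Sum>x<n. \<Sum>y<n. \<Sum>i\<in>I. w i x * cnj (w i y) * M $$ (y, x))"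
    unfolding trace_prod_def using assms by (simp add: sum_distrib_right)
  also have "\<dots> = (\<Sum>i\<in>I. \<Sum>x<n. \<Sum>y<n. w i x * cnj (w i y) * M $$ (y, x))"
    by (simp add: sum.swap[of _ I])
  also have "\<dots> = (\<Sum>i\<in>I. \<Sum>y<n. \<Sum>x<n. w i x * cnj (w i y) * M $$ (y, x))"
    by (rule sum.cong[OF refl]) (rule sum.swap)
  also have "\<dots> = (\<Sum>i\<in>I. quad_form n M (w i))"
    unfolding quad_form_def by (rule sum.cong[OF refl]) (simp add: sum_distrib_left mult_ac)
  finally show ?thesis .
qed

lemma quad_form_eq_trace_prod_outer: "quad_form n M g = trace_prod n (outer n g) M"
  by (subst trace_prod_gram[where I="{0::nat}" and w="\<lambda>_. g"]) auto

lemma dual_maxent_psd: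
  assumes Q: "quantum_channel d d N" and d0: "d > 0"
  shows "psd (dual_maxent d N)"
proof (rule psdI[OF dual_maxent_carrier])
  fix g
  have L: "linear_on d d N" and C: "psd (id_tensor d d d N (outer (d * d) g))"
    using Q outer_psd quantum_channel_linear_on[OF Q] unfolding quantum_channel_def by auto
  have "quad_form (d * d) (dual_maxent d N) g = trace_prod (d * d) (outer (d * d) g) (dual_maxent d N)" by (rule quad_form_eq_trace_prod_outer)
  also have "\<dots> = quad_form (d * d) (id_tensor d d d N (outer (d * d) g)) (maxent_vec d)"
    unfolding maxent_quad_form_id_tensor[OF L d0] ..
  finally have "quad_form (d * d) (dual_maxent d N) g = quad_form (d * d) (id_tensor d d d N (outer (d * d) g)) (maxent_vec d)" .
  moreover have "id_tensor d d d N (outer (d * d) g) \<in> carrier_mat (d * d) (d * d)"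
    unfolding id_tensor_def by simp
  ultimately show "Im (quad_form (d * d) (dual_maxent d N) g) = 0 \<and> 0 \<le> Re (quad_form (d * d) (dual_maxent d N) g)"
    using psd_quad_form[OF C] by auto
qed

lemma fidelity_id_tensor_maxent:
  assumes Q: "quantum_channel d d N" and d0: "d > 0" and rho: "density (d * d) \<rho>"
  shows "fidelity (id_tensor d d d N \<rho>) (maxent d) = sqrt (Re (trace_prod (d * d) \<rho> (dual_maxent d N)))"
proof -
  have "\<rho> \<in> carrier_mat (d * d) (d * d)" "psd \<rho>" using rho unfolding density_def by auto
  moreover have "id_tensor d d d N \<rho> \<in> carrier_mat (d * d) (d * d)" by (simp add: id_tensor_def)
  ultimately show ?thesis
    using Q unfolding quantum_channel_def maxent_eq_outer[OF d0]
    by (simp add: fidelity_outer inner_prod_maxent_vec[OF d0]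
        maxent_quad_form_id_tensor[OF quantum_channel_linear_on[OF Q] d0])
qed

lemma density_gram:
  assumes "density n \<rho>"
  obtains w where "\<And>x y. x < n \<Longrightarrow> y < n \<Longrightarrow> \<rho> $$ (x, y) = (\<Sum>i<n. w i x * cnj (w i y))"
    "(\<Sum>i<n. Re (inner_prod n (w i) (w i))) = 1"
proof -
  have c: "\<rho> \<in> carrier_mat n n" "psd \<rho>" "mtrace \<rho> = 1" using assms unfolding density_def by auto
  obtain w where w: "\<forall>x<n. \<forall>y<n. \<rho> $$ (x, y) = (\<Sum>i<n. w i x * cnj (w i y))" using psd_gram[OF c(2,1)] by blast
  have "mtrace \<rho> = (\<Sum>x<n. \<Sum>i<n. w i x * cnj (w i x))" unfolding mtrace_def using c(1) w by simp
  also have "\<dots> = (\<Sum>i<n. inner_prod n (w i) (w i))"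
    unfolding inner_prod_def by (subst sum.swap) (simp add: mult.commute)
  finally have "mtrace \<rho> = (\<Sum>i<n. inner_prod n (w i) (w i))" .
  hence "(\<Sum>i<n. Re (inner_prod n (w i) (w i))) = 1" using c(3) by (metis Re_sum one_complex.sel(1))
  thus ?thesis using that w by blast
qed

text \<open>Density matrices are convex combinations of pure states.\<close>
lemma trace_prod_density_le:
  assumes rho: "density n \<rho>" and M: "\<And>g. Re (quad_form n M g) \<le> c * Re (inner_prod n g g)"
  shows "Re (trace_prod n \<rho> M) \<le> c"
proof -
  obtain w where w: "\<And>x y. x < n \<Longrightarrow> y < n \<Longrightarrow> \<rho> $$ (x, y) = (\<Sum>i<n. w i x * cnj (w i y))"
    "(\<Sum>i<n. Re (inner_prod n (w i) (w i))) = 1"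
    using density_gram[OF rho] by blast
  have "Re (trace_prod n \<rho> M) = (\<Sum>i<n. Re (quad_form n M (w i)))"
    by (simp add: trace_prod_gram[OF w(1)])
  also have "\<dots> \<le> (\<Sum>i<n. c * Re (inner_prod n (w i) (w i)))" by (intro sum_mono M)
  also have "\<dots> = c" using w(2) by (simp add: sum_distrib_left[symmetric])
  finally show ?thesis .
qed

lemma trace_prod_density_psd:
  assumes rho: "density n \<rho>" and M: "psd M" "M \<in> carrier_mat n n"
  shows "Im (trace_prod n \<rho> M) = 0" "Re (trace_prod n \<rho> M) \<ge> 0"
proof -
  obtain w where w: "\<And>x y. x < n \<Longrightarrow> y < n \<Longrightarrow> \<rho> $$ (x, y) = (\<Sum>i<n. w i x * cnj (w i y))"
    using density_gram[OF rho] by blast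
  have "trace_prod n \<rho> M = (\<Sum>i<n. quad_form n M (w i))"
    using trace_prod_gram[where n=n and R=\<rho> and I="{..<n}" and w=w and M=M] w by simp
  thus "Im (trace_prod n \<rho> M) = 0" "Re (trace_prod n \<rho> M) \<ge> 0"
    using psd_quad_form[OF M] by (auto simp: sum_nonneg)
qed

lemma inner_prod_self: "inner_prod n g g = of_real (\<Sum>x<n. (cmod (g x))\<^sup>2)"
  unfolding inner_prod_def of_real_sum
  by (rule sum.cong[OF refl]) (simp add: complex_norm_square mult.commute del: of_real_power)

lemma quad_form_le_entry_bound:
  fixes M :: "complex mat"
  shows "Re (quad_form n M g) \<le> (2 * real n * (\<Sum>x<n. \<Sum>y<n. cmod (M $$ (x, y)))) * Re (inner_prod n g g)"
proof -
  define K where "K = (\<Sum>x<n. \<Sum>y<n. cmod (M $$ (x, y)))"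
  have K0: "K \<ge> 0" unfolding K_def by (simp add: sum_nonneg)
  have Kb: "cmod (M $$ (x, y)) \<le> K" if "x < n" "y < n" for x y
  proof -
    have "cmod (M $$ (x, y)) \<le> (\<Sum>y<n. cmod (M $$ (x, y)))"
      using that by (intro member_le_sum) auto
    also have "\<dots> \<le> K" unfolding K_def using that by (intro member_le_sum[of x]) (auto intro: sum_nonneg)
    finally show ?thesis .
  qed
  have "Re (quad_form n M g) \<le> cmod (quad_form n M g)" by (rule complex_Re_le_cmod)
  also have "\<dots> \<le> (\<Sum>x<n. \<Sum>y<n. cmod (g x) * cmod (M $$ (x, y)) * cmod (g y))"
    unfolding quad_form_def sum_distrib_left
    by (rule order_trans[OF norm_sum sum_mono], rule order_trans[OF norm_sum sum_mono]) (simp add: norm_mult)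
  also have "\<dots> \<le> (\<Sum>x<n. \<Sum>y<n. K * ((cmod (g x))\<^sup>2 + (cmod (g y))\<^sup>2))"
  proof (intro sum_mono)
    fix x y assume xy: "x \<in> {..<n}" "y \<in> {..<n}"
    have "cmod (g x) * cmod (g y) \<le> (cmod (g x))\<^sup>2 + (cmod (g y))\<^sup>2"
      by (smt (verit, ccfv_SIG) norm_ge_zero power2_eq_square mult_left_mono mult_right_mono sum_squares_ge_zero)
    moreover have "cmod (M $$ (x, y)) \<le> K" using Kb xy by auto
    moreover note K0
    ultimately have "cmod (M $$ (x, y)) * (cmod (g x) * cmod (g y)) \<le> K * ((cmod (g x))\<^sup>2 + (cmod (g y))\<^sup>2)"
      by (intro mult_mono) auto
    thus "cmod (g x) * cmod (M $$ (x, y)) * cmod (g y) \<le> K * ((cmod (g x))\<^sup>2 + (cmod (g y))\<^sup>2)"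
      by (simp add: mult_ac)
  qed
  also have "\<dots> = K * (2 * real n * (\<Sum>x<n. (cmod (g x))\<^sup>2))"
    by (simp add: sum_distrib_left sum.distrib sum_distrib_right[symmetric] algebra_simps)
  also have "(\<Sum>x<n. (cmod (g x))\<^sup>2) = Re (inner_prod n g g)"
    unfolding inner_prod_self by simp
  finally show ?thesis unfolding K_def by (simp add: mult_ac)
qed

lemma quad_form_scale: "quad_form n M (\<lambda>i. of_real t * f i) = of_real (t\<^sup>2) * quad_form n M f"
  unfolding quad_form_def by (simp add: sum_distrib_left mult_ac power2_eq_square)

lemma density_outer: "inner_prod n f f = 1 \<Longrightarrow> density n (outer n f)"
  unfolding density_def by (simp add: outer_psd mtrace_outer)

definition fid_values :: "nat \<Rightarrow> (complex mat \<Rightarrow> complex mat) \<Rightarrow> real set" where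
  "fid_values d N = (\<lambda>\<rho>. sqrt (Re (trace_prod (d * d) \<rho> (dual_maxent d N)))) ` {\<rho>. density (d * d) \<rho>}"

lemma opt_fid_eq_Sup:
  assumes "quantum_channel d d N" "d > 0"
  shows "opt_fid d N = Sup (fid_values d N)"
proof -
  have "{fidelity (id_tensor d d d N \<rho>) (maxent d) |\<rho>. density (d * d) \<rho>} =
      (\<lambda>\<rho>. fidelity (id_tensor d d d N \<rho>) (maxent d)) ` {\<rho>. density (d * d) \<rho>}"
    by blast
  also have "\<dots> = fid_values d N"
    unfolding fid_values_def using fidelity_id_tensor_maxent[OF assms] by (intro image_cong) auto
  finally show ?thesis unfolding opt_fid_def by simp
qed

lemma fid_values_nonempty: "d > 0 \<Longrightarrow> fid_values d N \<noteq> {}"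
  unfolding fid_values_def using density_outer[of "d * d" "\<lambda>i. if i = 0 then 1 else 0"]
  by (auto simp: inner_prod_def)

lemma bdd_above_fid_values: "bdd_above (fid_values d N)"
proof
  fix x assume "x \<in> fid_values d N"
  then obtain \<rho> where \<rho>: "density (d * d) \<rho>" and x: "x = sqrt (Re (trace_prod (d * d) \<rho> (dual_maxent d N)))"
    unfolding fid_values_def by auto
  have "Re (trace_prod (d * d) \<rho> (dual_maxent d N))
      \<le> 2 * real (d * d) * (\<Sum>x<d * d. \<Sum>y<d * d. cmod (dual_maxent d N $$ (x, y)))"
    by (rule trace_prod_density_le[OF \<rho> quad_form_le_entry_bound])
  thus "x \<le> sqrt (2 * real (d * d) * (\<Sum>x<d * d. \<Sum>y<d * d. cmod (dual_maxent d N $$ (x, y))))"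
    unfolding x by (rule real_sqrt_le_mono)
qed

lemma fid_values_nonneg:
  "quantum_channel d d N \<Longrightarrow> d > 0 \<Longrightarrow> x \<in> fid_values d N \<Longrightarrow> x \<ge> 0"
  unfolding fid_values_def
  using trace_prod_density_psd(2)[OF _ dual_maxent_psd dual_maxent_carrier] by auto

lemma fid_value_le_opt_fid:
  assumes "quantum_channel d d N" "d > 0" "density (d * d) \<rho>"
  shows "sqrt (Re (trace_prod (d * d) \<rho> (dual_maxent d N))) \<le> opt_fid d N"
  unfolding opt_fid_eq_Sup[OF assms(1,2)]
  by (rule cSup_upper[OF _ bdd_above_fid_values]) (use assms(3) in \<open>auto simp: fid_values_def\<close>)

lemma opt_fid_nonneg:
  assumes "quantum_channel d d N" "d > 0"
  shows "opt_fid d N \<ge> 0"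
proof -
  obtain x where x: "x \<in> fid_values d N" using fid_values_nonempty[OF assms(2)] by blast
  have "0 \<le> x" by (rule fid_values_nonneg[OF assms x])
  also have "x \<le> Sup (fid_values d N)" by (rule cSup_upper[OF x bdd_above_fid_values])
  finally show ?thesis unfolding opt_fid_eq_Sup[OF assms] .
qed

text \<open>Test with the pure state \<open>|u\<rangle>\<langle>u|/|u|\<^sup>2\<close>.\<close>
lemma quad_form_dual_maxent_le:
  assumes Q: "quantum_channel d d N" and d0: "d > 0"
  shows "Re (quad_form (d * d) (dual_maxent d N) u) \<le> (opt_fid d N)\<^sup>2 * Re (inner_prod (d * d) u u)"
proof -
  define n where "n = d * d"
  define s where "s = Re (inner_prod n u u)"
  have ipu: "inner_prod n u u = of_real s" unfolding s_def inner_prod_self by simp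
  have s0: "s \<ge> 0" unfolding s_def inner_prod_self by (simp add: sum_nonneg)
  show ?thesis
  proof (cases "s = 0")
    case True
    thus ?thesis using quad_form_le_entry_bound[of n "dual_maxent d N" u] unfolding s_def n_def by simp
  next
    case False
    hence sp: "s > 0" using s0 by simp
    define t where "t = 1 / sqrt s"
    define v where "v i = of_real t * u i" for i
    have t2: "t\<^sup>2 = 1 / s" unfolding t_def using sp by (simp add: power_divide)
    have "inner_prod n v v = 1" unfolding v_def inner_prod_scale ipu t2 using sp by (simp flip: of_real_mult)
    hence "sqrt (Re (quad_form n (dual_maxent d N) v)) \<le> opt_fid d N"
      using fid_value_le_opt_fid[OF Q d0 density_outer] unfolding quad_form_eq_trace_prod_outer n_def by blast
    moreover have "Re (quad_form n (dual_maxent d N) v) \<ge> 0"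
      using psd_quad_form(2)[OF dual_maxent_psd[OF Q d0] dual_maxent_carrier] unfolding n_def .
    ultimately have "Re (quad_form n (dual_maxent d N) v) \<le> (opt_fid d N)\<^sup>2"
      by (metis real_sqrt_le_iff real_sqrt_pow2 real_sqrt_unique sqrt_le_D)
    moreover have "Re (quad_form n (dual_maxent d N) v) = Re (quad_form n (dual_maxent d N) u) / s"
      unfolding v_def quad_form_scale t2 by simp
    ultimately have "Re (quad_form n (dual_maxent d N) u) / s \<le> (opt_fid d N)\<^sup>2" by simp
    thus ?thesis using sp unfolding s_def n_def by (simp add: divide_le_eq mult.commute)
  qed
qed

section \<open>The tensor product channel\<close>

lemma tensor_channel_block:
  "tensor_channel d1 d2 N1 N2 X = mat (d1 * d2) (d1 * d2) (\<lambda>(r, c).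
      \<Sum>i<d1. \<Sum>j<d1. N1 (mat_unit d1 i j) $$ (r div d2, c div d2) * N2 (block d2 X i j) $$ (r mod d2, c mod d2))"
  unfolding tensor_channel_def block_def ..

lemma block_add:
  assumes "A \<in> carrier_mat (n * d) (n * d)" "B \<in> carrier_mat (n * d) (n * d)" "i < n" "j < n"
  shows "block d (A + B) i j = block d A i j + block d B i j"
proof (rule eq_matI)
  fix a b assume "a < dim_row (block d A i j + block d B i j)" "b < dim_col (block d A i j + block d B i j)"
  hence ab: "a < d" "b < d" by (auto simp: block_def)
  have "i * d + a < n * d" "j * d + b < n * d" using mult_add_less_mult assms ab by auto
  thus "block d (A + B) i j $$ (a, b) = (block d A i j + block d B i j) $$ (a, b)"
    using assms ab unfolding block_def by auto
qed (auto simp: block_def)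

lemma block_smult:
  assumes "A \<in> carrier_mat (n * d) (n * d)" "i < n" "j < n"
  shows "block d (c \<cdot>\<^sub>m A) i j = c \<cdot>\<^sub>m block d A i j"
proof (rule eq_matI)
  fix a b assume "a < dim_row (c \<cdot>\<^sub>m block d A i j)" "b < dim_col (c \<cdot>\<^sub>m block d A i j)"
  hence ab: "a < d" "b < d" by (auto simp: block_def)
  have "i * d + a < n * d" "j * d + b < n * d" using mult_add_less_mult assms ab by auto
  thus "block d (c \<cdot>\<^sub>m A) i j $$ (a, b) = (c \<cdot>\<^sub>m block d A i j) $$ (a, b)"
    using assms ab unfolding block_def by auto
qed (auto simp: block_def)

lemma linear_on_tensor_channel:
  assumes L2: "linear_on d2 d2 N2"
  shows "linear_on (d1 * d2) (d1 * d2) (tensor_channel d1 d2 N1 N2)"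
proof -
  have N2add: "N2 (A + B) = N2 A + N2 B" "N2 (c \<cdot>\<^sub>m A) = c \<cdot>\<^sub>m N2 A" "N2 A \<in> carrier_mat d2 d2"
    if "A \<in> carrier_mat d2 d2" "B \<in> carrier_mat d2 d2" for A B c
    using L2 that unfolding linear_on_def by auto
  have N2dim: "dim_row (N2 (block d2 X i j)) = d2" "dim_col (N2 (block d2 X i j)) = d2" for X i j
    using N2add(3)[OF block_carrier block_carrier] by auto
  show ?thesis unfolding linear_on_def
  proof (intro conjI ballI allI)
    fix A :: "complex mat" assume "A \<in> carrier_mat (d1 * d2) (d1 * d2)"
    show "tensor_channel d1 d2 N1 N2 A \<in> carrier_mat (d1 * d2) (d1 * d2)" unfolding tensor_channel_def by simp
  next
    fix A B :: "complex mat" assume A: "A \<in> carrier_mat (d1 * d2) (d1 * d2)" and B: "B \<in> carrier_mat (d1 * d2) (d1 * d2)"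
    show "tensor_channel d1 d2 N1 N2 (A + B) = tensor_channel d1 d2 N1 N2 A + tensor_channel d1 d2 N1 N2 B"
    proof (rule eq_matI)
      fix r c assume "r < dim_row (tensor_channel d1 d2 N1 N2 A + tensor_channel d1 d2 N1 N2 B)"
        "c < dim_col (tensor_channel d1 d2 N1 N2 A + tensor_channel d1 d2 N1 N2 B)"
      hence rc: "r < d1 * d2" "c < d1 * d2" by (auto simp: tensor_channel_block)
      hence d20: "d2 > 0" by (cases d2) auto
      have m: "r mod d2 < d2" "c mod d2 < d2" using d20 by auto
      show "tensor_channel d1 d2 N1 N2 (A + B) $$ (r, c) = (tensor_channel d1 d2 N1 N2 A + tensor_channel d1 d2 N1 N2 B) $$ (r, c)"
        unfolding tensor_channel_block using rc m
        by (simp add: block_add[OF A B] N2add(1)[OF block_carrier block_carrier] N2dim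
            sum.distrib distrib_left)
    qed (auto simp: tensor_channel_block)
  next
    fix A :: "complex mat" and c assume A: "A \<in> carrier_mat (d1 * d2) (d1 * d2)"
    show "tensor_channel d1 d2 N1 N2 (c \<cdot>\<^sub>m A) = c \<cdot>\<^sub>m tensor_channel d1 d2 N1 N2 A"
    proof (rule eq_matI)
      fix r c' assume "r < dim_row (c \<cdot>\<^sub>m tensor_channel d1 d2 N1 N2 A)" "c' < dim_col (c \<cdot>\<^sub>m tensor_channel d1 d2 N1 N2 A)"
      hence rc: "r < d1 * d2" "c' < d1 * d2" by (auto simp: tensor_channel_block)
      hence d20: "d2 > 0" by (cases d2) auto
      have m: "r mod d2 < d2" "c' mod d2 < d2" using d20 by auto
      show "tensor_channel d1 d2 N1 N2 (c \<cdot>\<^sub>m A) $$ (r, c') = (c \<cdot>\<^sub>m tensor_channel d1 d2 N1 N2 A) $$ (r, c')"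
        unfolding tensor_channel_block using rc m
        by (simp add: block_smult[OF A] N2add(2)[OF block_carrier block_carrier] N2dim
            sum_distrib_left mult_ac)
    qed (auto simp: tensor_channel_block)
  qed
qed

lemma mtrace_mat_unit: "i < d \<Longrightarrow> j < d \<Longrightarrow> mtrace (mat_unit d i j) = (if i = j then 1 else 0)"
  unfolding mtrace_def mat_unit_def by (auto simp: sum.delta)

lemma mtrace_blocks:
  assumes "X \<in> carrier_mat (n * d) (n * d)"
  shows "mtrace X = (\<Sum>i<n. mtrace (block d X i i))"
  using assms unfolding mtrace_def block_def by (simp add: sum_mult_split)

lemma mtrace_tensor_channel:
  assumes Q1: "quantum_channel d1 d1 N1" and Q2: "quantum_channel d2 d2 N2"
    and X: "X \<in> carrier_mat (d1 * d2) (d1 * d2)"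
  shows "mtrace (tensor_channel d1 d2 N1 N2 X) = mtrace X"
proof -
  have tr1: "mtrace (N1 (mat_unit d1 i j)) = (if i = j then 1 else 0)" if "i < d1" "j < d1" for i j
    using Q1 that mtrace_mat_unit unfolding quantum_channel_def by (metis mat_unit_carrier)
  have tr2: "mtrace (N2 (block d2 X i j)) = mtrace (block d2 X i j)" for i j
    using Q2 unfolding quantum_channel_def by (metis block_carrier)
  have dims: "N1 (mat_unit d1 i j) \<in> carrier_mat d1 d1" "N2 (block d2 X i j) \<in> carrier_mat d2 d2" for i j
    using Q1 Q2 unfolding quantum_channel_def by (metis mat_unit_carrier block_carrier)+
  have dim_rows: "dim_row (N1 (mat_unit d1 i j)) = d1" "dim_row (N2 (block d2 X i j)) = d2" for i j
    using dims[of i j] by auto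
  have "mtrace (tensor_channel d1 d2 N1 N2 X) = (\<Sum>r<d1 * d2. \<Sum>i<d1. \<Sum>j<d1.
      N1 (mat_unit d1 i j) $$ (r div d2, r div d2) * N2 (block d2 X i j) $$ (r mod d2, r mod d2))"
    unfolding mtrace_def tensor_channel_block by simp
  also have "\<dots> = (\<Sum>i<d1. \<Sum>r<d1 * d2. \<Sum>j<d1.
      N1 (mat_unit d1 i j) $$ (r div d2, r div d2) * N2 (block d2 X i j) $$ (r mod d2, r mod d2))"
    by (rule sum.swap)
  also have "\<dots> = (\<Sum>i<d1. \<Sum>j<d1. \<Sum>r<d1 * d2.
      N1 (mat_unit d1 i j) $$ (r div d2, r div d2) * N2 (block d2 X i j) $$ (r mod d2, r mod d2))"
    by (rule sum.cong[OF refl]) (rule sum.swap)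
  also have "\<dots> = (\<Sum>i<d1. \<Sum>j<d1. mtrace (N1 (mat_unit d1 i j)) * mtrace (N2 (block d2 X i j)))"
    using dims by (intro sum.cong refl) (simp add: sum_mult_split mtrace_def sum_product dim_rows)
  also have "\<dots> = (\<Sum>i<d1. mtrace (block d2 X i i))"
    by (simp add: tr1 tr2 if_distrib[of "\<lambda>x. x * _"] sum.delta cong: if_cong)
  also have "\<dots> = mtrace X" using mtrace_blocks[OF X] ..
  finally show ?thesis .
qed

definition reindex_mat :: "nat \<Rightarrow> (nat \<Rightarrow> nat) \<Rightarrow> complex mat \<Rightarrow> complex mat" where
  "reindex_mat n \<sigma> M = mat n n (\<lambda>(i, j). M $$ (\<sigma> i, \<sigma> j))"

lemma sum_fibres:
  fixes \<sigma> :: "nat \<Rightarrow> nat" and h :: "nat \<Rightarrow> 'a::comm_semiring_0"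
  assumes "\<And>i. i < n \<Longrightarrow> \<sigma> i < m"
  shows "(\<Sum>i<n. h (\<sigma> i) * f i) = (\<Sum>a<m. h a * (\<Sum>i | i < n \<and> \<sigma> i = a. f i))"
proof -
  have "(\<Sum>i<n. h (\<sigma> i) * f i) = (\<Sum>a<m. \<Sum>i\<in>{i \<in> {..<n}. \<sigma> i = a}. h (\<sigma> i) * f i)"
    using assms by (subst sum.group[where S="{..<n}" and T="{..<m}" and g=\<sigma>, symmetric]) auto
  also have "\<dots> = (\<Sum>a<m. h a * (\<Sum>i | i < n \<and> \<sigma> i = a. f i))"
    by (intro sum.cong refl, subst sum_distrib_left, rule sum.cong) auto
  finally show ?thesis .
qed

text \<open>Positivity survives any reindexing \<open>M\<^sub>\<sigma>\<^sub>i\<^sub>,\<^sub>\<sigma>\<^sub>j\<close>: its quadratic form at \<open>f\<close> is that of \<open>M\<close> at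
  the push-forward of \<open>f\<close> along \<open>\<sigma>\<close>.\<close>
lemma psd_reindex_mat:
  assumes M: "psd M" "M \<in> carrier_mat m m" and \<sigma>: "\<And>i. i < n \<Longrightarrow> \<sigma> i < m"
  shows "psd (reindex_mat n \<sigma> M)"
proof (rule psdI)
  show "reindex_mat n \<sigma> M \<in> carrier_mat n n" by (simp add: reindex_mat_def)
  fix f :: "nat \<Rightarrow> complex"
  define g where "g a = (\<Sum>i | i < n \<and> \<sigma> i = a. f i)" for a
  have inner: "(\<Sum>j<n. M $$ (\<sigma> i, \<sigma> j) * f j) = (\<Sum>b<m. M $$ (\<sigma> i, b) * g b)" for i
    unfolding g_def using sum_fibres[OF \<sigma>, where h="\<lambda>b. M $$ (\<sigma> i, b)" and f=f] by simp
  have "quad_form n (reindex_mat n \<sigma> M) f = (\<Sum>i<n. cnj (f i) * (\<Sum>b<m. M $$ (\<sigma> i, b) * g b))"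
    unfolding quad_form_def reindex_mat_def by (simp add: inner)
  also have "\<dots> = (\<Sum>i<n. (\<Sum>b<m. M $$ (\<sigma> i, b) * g b) * cnj (f i))"
    by (rule sum.cong[OF refl]) (rule mult.commute)
  also have "\<dots> = (\<Sum>a<m. (\<Sum>b<m. M $$ (a, b) * g b) * (\<Sum>i | i < n \<and> \<sigma> i = a. cnj (f i)))"
    using sum_fibres[OF \<sigma>, where h="\<lambda>a. \<Sum>b<m. M $$ (a, b) * g b" and f="\<lambda>i. cnj (f i)"] by simp
  also have "\<dots> = quad_form m M g"
    unfolding quad_form_def g_def by (simp add: cnj_sum mult.commute)
  finally show "Im (quad_form n (reindex_mat n \<sigma> M) f) = 0 \<and> 0 \<le> Re (quad_form n (reindex_mat n \<sigma> M) f)"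
    using psd_quad_form[OF M] by simp
qed

text \<open>Exchange of the two last digits of a mixed-radix index: \<open>(r, a, b) \<mapsto> (r, b, a)\<close>.\<close>
definition swap_digits :: "nat \<Rightarrow> nat \<Rightarrow> nat \<Rightarrow> nat" where
  "swap_digits p q t = (t div q div p * q + t mod q) * p + t div q mod p"

lemma swap_digits:
  assumes "a < p" "b < q"
  shows "swap_digits p q ((r * p + a) * q + b) = (r * q + b) * p + a"
  using assms unfolding swap_digits_def by simp

lemma three_digits:
  fixes t n p q :: nat
  assumes "t < n * p * q"
  obtains r a b where "r < n" "a < p" "b < q" "t = (r * p + a) * q + b"
proof
  have pq: "p > 0" "q > 0" using assms by (auto intro: gr0I)
  thus "t mod q < q" "t div q mod p < p" "t = (t div q div p * p + t div q mod p) * q + t mod q" by simp_all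
  have "t div q < n * p" using assms by (simp add: less_mult_imp_div_less)
  thus "t div q div p < n" by (simp add: less_mult_imp_div_less)
qed

lemma swap_digits_less:
  fixes t n :: nat
  assumes "t < n * p * q"
  shows "swap_digits p q t < n * q * p"
  using assms by (elim three_digits) (simp add: swap_digits mult_add_less_mult)

lemma block_block:
  assumes "i < p" "j < p"
  shows "block q (block (p * q) X r r') i j = block q X (r * p + i) (r' * p + j)"
proof (rule eq_matI)
  fix x y assume "x < dim_row (block q X (r * p + i) (r' * p + j))" "y < dim_col (block q X (r * p + i) (r' * p + j))"
  hence xy: "x < q" "y < q" by (simp_all add: block_def)
  have eqs: "r * (p * q) + (i * q + x) = (r * p + i) * q + x" "r' * (p * q) + (j * q + y) = (r' * p + j) * q + y"
    by (simp_all add: algebra_simps)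
  have "i * q + x < p * q" "j * q + y < p * q" using assms xy by (simp_all add: mult_add_less_mult)
  thus "block q (block (p * q) X r r') i j $$ (x, y) = block q X (r * p + i) (r' * p + j) $$ (x, y)"
    using xy unfolding block_def by simp (simp only: eqs)
qed (simp_all add: block_def)

text \<open>\<open>\<I> \<otimes> N\<^sub>1 \<otimes> N\<^sub>2\<close> factors as \<open>\<I> \<otimes> N\<^sub>2\<close> followed, after moving the \<open>B\<^sub>2\<close> digit before the
  \<open>A\<^sub>1\<close> digit, by \<open>\<I> \<otimes> N\<^sub>1\<close>.\<close>
lemma id_tensor_tensor_channel:
  assumes L1: "linear_on d1 d1 N1"
  shows "id_tensor n (d1 * d2) (d1 * d2) (tensor_channel d1 d2 N1 N2) X =
    reindex_mat (n * d1 * d2) (swap_digits d1 d2) (id_tensor (n * d2) d1 d1 N1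
      (reindex_mat (n * d2 * d1) (swap_digits d2 d1) (id_tensor (n * d1) d2 d2 N2 X)))"
    (is "?L = reindex_mat _ _ (id_tensor _ _ _ _ ?Y)")
proof (rule eq_matI)
  fix R C assume "R < dim_row (reindex_mat (n * d1 * d2) (swap_digits d1 d2) (id_tensor (n * d2) d1 d1 N1 ?Y))"
    "C < dim_col (reindex_mat (n * d1 * d2) (swap_digits d1 d2) (id_tensor (n * d2) d1 d1 N1 ?Y))"
  hence "R < n * d1 * d2" "C < n * d1 * d2" by (simp_all add: reindex_mat_def)
  then obtain r a b r' a' b' where digits: "r < n" "a < d1" "b < d2" "R = (r * d1 + a) * d2 + b"
      "r' < n" "a' < d1" "b' < d2" "C = (r' * d1 + a') * d2 + b'"
    by (metis three_digits)
  have rb: "r * d2 + b < n * d2" "r' * d2 + b' < n * d2" using digits by (simp_all add: mult_add_less_mult)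
  have ri: "r * d1 + i < n * d1" "r' * d1 + i < n * d1" if "i < d1" for i
    using digits that by (simp_all add: mult_add_less_mult)
  have RC: "R = r * (d1 * d2) + (a * d2 + b)" "C = r' * (d1 * d2) + (a' * d2 + b')"
    using digits by (simp_all add: algebra_simps)
  have "?L $$ (R, C) = tensor_channel d1 d2 N1 N2 (block (d1 * d2) X r r') $$ (a * d2 + b, a' * d2 + b')"
    unfolding RC by (rule id_tensor_index) (use digits in \<open>simp_all add: mult_add_less_mult\<close>)
  also have "\<dots> = (\<Sum>i<d1. \<Sum>j<d1. N1 (mat_unit d1 i j) $$ (a, a') *
      N2 (block d2 (block (d1 * d2) X r r') i j) $$ (b, b'))"
    using digits by (simp add: tensor_channel_block mult_add_less_mult)
  also have "\<dots> = (\<Sum>i<d1. \<Sum>j<d1. N1 (mat_unit d1 i j) $$ (a, a') *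
      N2 (block d2 X (r * d1 + i) (r' * d1 + j)) $$ (b, b'))"
    by (simp add: block_block)
  also have "\<dots> = (\<Sum>i<d1. \<Sum>j<d1. block d1 ?Y (r * d2 + b) (r' * d2 + b') $$ (i, j) * N1 (mat_unit d1 i j) $$ (a, a'))"
    using digits ri rb
    by (intro sum.cong refl) (simp add: block_def reindex_mat_def swap_digits id_tensor_index
        mult_add_less_mult)
  also have "\<dots> = N1 (block d1 ?Y (r * d2 + b) (r' * d2 + b')) $$ (a, a')"
    using linear_on_expand[OF L1 block_carrier] digits by simp
  also have "\<dots> = reindex_mat (n * d1 * d2) (swap_digits d1 d2) (id_tensor (n * d2) d1 d1 N1 ?Y) $$ (R, C)"
    using digits rb \<open>R < n * d1 * d2\<close> \<open>C < n * d1 * d2\<close>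
    by (simp add: reindex_mat_def swap_digits id_tensor_index)
  finally show "?L $$ (R, C) = reindex_mat (n * d1 * d2) (swap_digits d1 d2) (id_tensor (n * d2) d1 d1 N1 ?Y) $$ (R, C)" .
qed (simp_all add: id_tensor_def reindex_mat_def)

lemma psd_id_tensor_tensor_channel:
  assumes Q1: "quantum_channel d1 d1 N1" and Q2: "quantum_channel d2 d2 N2"
    and X: "X \<in> carrier_mat (n * (d1 * d2)) (n * (d1 * d2))" and pX: "psd X"
  shows "psd (id_tensor n (d1 * d2) (d1 * d2) (tensor_channel d1 d2 N1 N2) X)"
proof -
  have CP1: "\<And>m Z. Z \<in> carrier_mat (m * d1) (m * d1) \<Longrightarrow> psd Z \<Longrightarrow> psd (id_tensor m d1 d1 N1 Z)"
    and CP2: "\<And>m Z. Z \<in> carrier_mat (m * d2) (m * d2) \<Longrightarrow> psd Z \<Longrightarrow> psd (id_tensor m d2 d2 N2 Z)"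
    using Q1 Q2 unfolding quantum_channel_def by blast+
  have "psd (id_tensor (n * d1) d2 d2 N2 X)"
    using CP2[of X "n * d1"] X pX by (simp add: mult.assoc)
  hence "psd (reindex_mat (n * d2 * d1) (swap_digits d2 d1) (id_tensor (n * d1) d2 d2 N2 X))"
    by (rule psd_reindex_mat[where m="n * d1 * d2"]) (simp_all add: id_tensor_def swap_digits_less)
  hence "psd (id_tensor (n * d2) d1 d1 N1
      (reindex_mat (n * d2 * d1) (swap_digits d2 d1) (id_tensor (n * d1) d2 d2 N2 X)))"
    by (intro CP1) (simp_all add: reindex_mat_def)
  hence "psd (reindex_mat (n * d1 * d2) (swap_digits d1 d2) (id_tensor (n * d2) d1 d1 N1
      (reindex_mat (n * d2 * d1) (swap_digits d2 d1) (id_tensor (n * d1) d2 d2 N2 X))))"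
    by (rule psd_reindex_mat[where m="n * d2 * d1"]) (simp_all add: id_tensor_def swap_digits_less)
  thus ?thesis using id_tensor_tensor_channel[OF quantum_channel_linear_on[OF Q1]] by simp
qed

theorem quantum_channel_tensor_channel:
  assumes "quantum_channel d1 d1 N1" "quantum_channel d2 d2 N2"
  shows "quantum_channel (d1 * d2) (d1 * d2) (tensor_channel d1 d2 N1 N2)"
  using linear_on_tensor_channel[OF quantum_channel_linear_on[OF assms(2)]]
    mtrace_tensor_channel[OF assms] psd_id_tensor_tensor_channel[OF assms]
  unfolding quantum_channel_def linear_on_def by blast

section \<open>The operator \<open>\<chi>\<close> of the product channel\<close>

text \<open>An index \<open>y\<close> of \<open>(R\<^sub>1 \<otimes> R\<^sub>2) \<otimes> (B\<^sub>1 \<otimes> B\<^sub>2)\<close> has digits \<open>((r\<^sub>1, r\<^sub>2), (b\<^sub>1, b\<^sub>2))\<close>;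
  \<open>sys1_index\<close> and \<open>sys2_index\<close> give the indices \<open>(r\<^sub>1, b\<^sub>1)\<close> of \<open>R\<^sub>1 \<otimes> B\<^sub>1\<close> and \<open>(r\<^sub>2, b\<^sub>2)\<close> of
  \<open>R\<^sub>2 \<otimes> B\<^sub>2\<close>, and \<open>joint_index\<close> is the inverse map.\<close>
definition sys1_index :: "nat \<Rightarrow> nat \<Rightarrow> nat \<Rightarrow> nat" where
  "sys1_index d1 d2 y = (y div (d1 * d2) div d2) * d1 + (y mod (d1 * d2) div d2)"

definition sys2_index :: "nat \<Rightarrow> nat \<Rightarrow> nat \<Rightarrow> nat" where
  "sys2_index d1 d2 y = (y div (d1 * d2) mod d2) * d2 + (y mod (d1 * d2) mod d2)"

definition joint_index :: "nat \<Rightarrow> nat \<Rightarrow> nat \<Rightarrow> nat \<Rightarrow> nat" where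
  "joint_index d1 d2 p1 p2 = ((p1 div d1) * d2 + p2 div d2) * (d1 * d2) + ((p1 mod d1) * d2 + p2 mod d2)"

lemma sys_index_digits:
  assumes "k2 < d2" "b1 < d1" "b2 < d2"
  shows "sys1_index d1 d2 ((k1 * d2 + k2) * (d1 * d2) + (b1 * d2 + b2)) = k1 * d1 + b1"
    "sys2_index d1 d2 ((k1 * d2 + k2) * (d1 * d2) + (b1 * d2 + b2)) = k2 * d2 + b2"
proof -
  have "b1 * d2 + b2 < d1 * d2" using assms mult_add_less_mult by auto
  thus "sys1_index d1 d2 ((k1 * d2 + k2) * (d1 * d2) + (b1 * d2 + b2)) = k1 * d1 + b1"
    "sys2_index d1 d2 ((k1 * d2 + k2) * (d1 * d2) + (b1 * d2 + b2)) = k2 * d2 + b2"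
    unfolding sys1_index_def sys2_index_def using assms by simp_all
qed

lemma sum_sys_index:
  fixes h :: "nat \<Rightarrow> nat \<Rightarrow> 'a::comm_monoid_add"
  shows "(\<Sum>y<(d1 * d2) * (d1 * d2). h (sys1_index d1 d2 y) (sys2_index d1 d2 y)) = (\<Sum>p1<d1 * d1. \<Sum>p2<d2 * d2. h p1 p2)"
proof -
  have "(\<Sum>y<(d1 * d2) * (d1 * d2). h (sys1_index d1 d2 y) (sys2_index d1 d2 y)) =
    (\<Sum>k<d1 * d2. \<Sum>b<d1 * d2. h (sys1_index d1 d2 (k * (d1 * d2) + b)) (sys2_index d1 d2 (k * (d1 * d2) + b)))"
    by (rule sum_mult_split)
  also have "\<dots> = (\<Sum>k1<d1. \<Sum>k2<d2. \<Sum>b<d1 * d2. h (sys1_index d1 d2 ((k1 * d2 + k2) * (d1 * d2) + b)) (sys2_index d1 d2 ((k1 * d2 + k2) * (d1 * d2) + b)))"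
    by (rule sum_mult_split)
  also have "\<dots> = (\<Sum>k1<d1. \<Sum>k2<d2. \<Sum>b1<d1. \<Sum>b2<d2. h (k1 * d1 + b1) (k2 * d2 + b2))"
  proof (rule sum.cong[OF refl], rule sum.cong[OF refl])
    fix k1 k2 assume k: "k1 \<in> {..<d1}" "k2 \<in> {..<d2}"
    show "(\<Sum>b<d1 * d2. h (sys1_index d1 d2 ((k1 * d2 + k2) * (d1 * d2) + b)) (sys2_index d1 d2 ((k1 * d2 + k2) * (d1 * d2) + b))) =
      (\<Sum>b1<d1. \<Sum>b2<d2. h (k1 * d1 + b1) (k2 * d2 + b2))"
      by (subst sum_mult_split) (rule sum.cong[OF refl], rule sum.cong[OF refl], use k in \<open>simp add: sys_index_digits\<close>)
  qed
  also have "\<dots> = (\<Sum>k1<d1. \<Sum>b1<d1. \<Sum>k2<d2. \<Sum>b2<d2. h (k1 * d1 + b1) (k2 * d2 + b2))"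
    by (rule sum.cong[OF refl]) (rule sum.swap)
  also have "\<dots> = (\<Sum>p1<d1 * d1. \<Sum>p2<d2 * d2. h p1 p2)"
    by (simp add: sum_mult_split)
  finally show ?thesis .
qed

lemma sys_index_properties:
  assumes y: "y < (d1 * d2) * (d1 * d2)"
  shows "sys1_index d1 d2 y < d1 * d1" "sys2_index d1 d2 y < d2 * d2"
    "sys1_index d1 d2 y div d1 = y div (d1 * d2) div d2" "sys1_index d1 d2 y mod d1 = y mod (d1 * d2) div d2"
    "sys2_index d1 d2 y div d2 = y div (d1 * d2) mod d2" "sys2_index d1 d2 y mod d2 = y mod (d1 * d2) mod d2"
    "joint_index d1 d2 (sys1_index d1 d2 y) (sys2_index d1 d2 y) = y"
proof -
  define D where "D = d1 * d2"
  have D0: "D > 0" using y unfolding D_def by (cases "d1 * d2") auto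
  hence d0: "d1 > 0" "d2 > 0" unfolding D_def by auto
  have k: "y div D < D" using y D0 unfolding D_def by (simp add: less_mult_imp_div_less)
  have b: "y mod D < D" using D0 by simp
  have k1: "y div D div d2 < d1" using k unfolding D_def by (simp add: less_mult_imp_div_less)
  have b1: "y mod D div d2 < d1" using b unfolding D_def by (simp add: less_mult_imp_div_less)
  have k2: "y div D mod d2 < d2" and b2: "y mod D mod d2 < d2" using d0 by auto
  show "sys1_index d1 d2 y < d1 * d1" unfolding sys1_index_def D_def[symmetric] using mult_add_less_mult[OF k1 b1] .
  show "sys2_index d1 d2 y < d2 * d2" unfolding sys2_index_def D_def[symmetric] using mult_add_less_mult[OF k2 b2] .
  show "sys1_index d1 d2 y div d1 = y div (d1 * d2) div d2" "sys1_index d1 d2 y mod d1 = y mod (d1 * d2) div d2"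
    unfolding sys1_index_def D_def[symmetric] using b1 by simp_all
  show "sys2_index d1 d2 y div d2 = y div (d1 * d2) mod d2" "sys2_index d1 d2 y mod d2 = y mod (d1 * d2) mod d2"
    unfolding sys2_index_def D_def[symmetric] using b2 by simp_all
  have "joint_index d1 d2 (sys1_index d1 d2 y) (sys2_index d1 d2 y) =
     (y div D div d2 * d2 + y div D mod d2) * D + (y mod D div d2 * d2 + y mod D mod d2)"
    unfolding joint_index_def sys1_index_def sys2_index_def D_def[symmetric] using b1 b2 by simp
  also have "\<dots> = y" by simp
  finally show "joint_index d1 d2 (sys1_index d1 d2 y) (sys2_index d1 d2 y) = y" .
qed

lemma block_mat_unit:
  assumes "i < d1" "i' < d1" "a < d1 * d2" "b < d1 * d2"
  shows "block d2 (mat_unit (d1 * d2) a b) i i' =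
    (if i = a div d2 \<and> i' = b div d2 then mat_unit d2 (a mod d2) (b mod d2) else 0\<^sub>m d2 d2)"
proof (rule eq_matI)
  fix p q assume "p < dim_row (if i = a div d2 \<and> i' = b div d2 then mat_unit d2 (a mod d2) (b mod d2) else 0\<^sub>m d2 d2)"
    "q < dim_col (if i = a div d2 \<and> i' = b div d2 then mat_unit d2 (a mod d2) (b mod d2) else 0\<^sub>m d2 d2)"
  hence pq: "p < d2" "q < d2" by (auto simp: mat_unit_def split: if_splits)
  have b1: "i * d2 + p < d1 * d2" "i' * d2 + q < d1 * d2" using mult_add_less_mult assms pq by auto
  have e1: "i * d2 + p = a \<longleftrightarrow> i = a div d2 \<and> p = a mod d2" using pq by auto
  have e2: "i' * d2 + q = b \<longleftrightarrow> i' = b div d2 \<and> q = b mod d2" using pq by auto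
  show "block d2 (mat_unit (d1 * d2) a b) i i' $$ (p, q) =
    (if i = a div d2 \<and> i' = b div d2 then mat_unit d2 (a mod d2) (b mod d2) else 0\<^sub>m d2 d2) $$ (p, q)"
    unfolding block_def mat_unit_def using pq b1 e1 e2 by auto
qed (auto simp: block_def mat_unit_def)

lemma sum_delta_pair:
  fixes n :: nat
  assumes "a < n" "b < n"
  shows "(\<Sum>i<n. \<Sum>j<n. if i = a \<and> j = b then f i j else 0) = f a b"
proof -
  have "(\<Sum>i<n. \<Sum>j<n. if i = a \<and> j = b then f i j else 0) = (\<Sum>i<n. if i = a then f i b else 0)"
    by (rule sum.cong[OF refl]) (use assms in \<open>auto simp: sum.delta'\<close>)
  also have "\<dots> = f a b" using assms by simp
  finally show ?thesis .
qed

lemma tensor_channel_mat_unit: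
  assumes L2: "linear_on d2 d2 N2" and ab: "a < d1 * d2" "b < d1 * d2" "j < d1 * d2" "k < d1 * d2"
  shows "tensor_channel d1 d2 N1 N2 (mat_unit (d1 * d2) a b) $$ (j, k) =
    N1 (mat_unit d1 (a div d2) (b div d2)) $$ (j div d2, k div d2) * N2 (mat_unit d2 (a mod d2) (b mod d2)) $$ (j mod d2, k mod d2)"
proof -
  have d20: "d2 > 0" using ab by (cases d2) auto
  have jm: "j mod d2 < d2" "k mod d2 < d2" using d20 by auto
  have a1: "a div d2 < d1" "b div d2 < d1" using ab by (simp_all add: less_mult_imp_div_less)
  have "tensor_channel d1 d2 N1 N2 (mat_unit (d1 * d2) a b) $$ (j, k) =
     (\<Sum>i<d1. \<Sum>i'<d1. N1 (mat_unit d1 i i') $$ (j div d2, k div d2) * N2 (block d2 (mat_unit (d1 * d2) a b) i i') $$ (j mod d2, k mod d2))"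
    unfolding tensor_channel_block using ab by simp
  also have "\<dots> = (\<Sum>i<d1. \<Sum>i'<d1. if i = a div d2 \<and> i' = b div d2 then
      N1 (mat_unit d1 i i') $$ (j div d2, k div d2) * N2 (mat_unit d2 (a mod d2) (b mod d2)) $$ (j mod d2, k mod d2) else 0)"
    by (intro sum.cong refl) (use ab jm linear_on_zero[OF L2 jm] in \<open>simp add: block_mat_unit\<close>)
  also have "\<dots> = N1 (mat_unit d1 (a div d2) (b div d2)) $$ (j div d2, k div d2) * N2 (mat_unit d2 (a mod d2) (b mod d2)) $$ (j mod d2, k mod d2)"
    by (rule sum_delta_pair[OF a1])
  finally show ?thesis .
qed

lemma dual_maxent_tensor_channel:
  assumes L2: "linear_on d2 d2 N2" and yx: "y < (d1 * d2) * (d1 * d2)" "x < (d1 * d2) * (d1 * d2)"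
  shows "dual_maxent (d1 * d2) (tensor_channel d1 d2 N1 N2) $$ (y, x) =
    dual_maxent d1 N1 $$ (sys1_index d1 d2 y, sys1_index d1 d2 x) * dual_maxent d2 N2 $$ (sys2_index d1 d2 y, sys2_index d1 d2 x)"
proof -
  have D0: "d1 * d2 > 0" using yx by (cases "d1 * d2") auto
  have bnd: "x mod (d1 * d2) < d1 * d2" "y mod (d1 * d2) < d1 * d2" "x div (d1 * d2) < d1 * d2" "y div (d1 * d2) < d1 * d2"
    using D0 yx by (auto simp: less_mult_imp_div_less)
  note py = sys_index_properties[OF yx(1)] and px = sys_index_properties[OF yx(2)]
  have "dual_maxent (d1 * d2) (tensor_channel d1 d2 N1 N2) $$ (y, x) =
     tensor_channel d1 d2 N1 N2 (mat_unit (d1 * d2) (x mod (d1 * d2)) (y mod (d1 * d2))) $$ (x div (d1 * d2), y div (d1 * d2)) / of_nat (d1 * d2)"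
    unfolding dual_maxent_def using yx by simp
  also have "\<dots> = N1 (mat_unit d1 (x mod (d1 * d2) div d2) (y mod (d1 * d2) div d2)) $$ (x div (d1 * d2) div d2, y div (d1 * d2) div d2) *
      N2 (mat_unit d2 (x mod (d1 * d2) mod d2) (y mod (d1 * d2) mod d2)) $$ (x div (d1 * d2) mod d2, y div (d1 * d2) mod d2) / of_nat (d1 * d2)"
    using tensor_channel_mat_unit[OF L2 bnd] by simp
  also have "\<dots> = dual_maxent d1 N1 $$ (sys1_index d1 d2 y, sys1_index d1 d2 x) * dual_maxent d2 N2 $$ (sys2_index d1 d2 y, sys2_index d1 d2 x)"
    unfolding dual_maxent_def using py px by simp
  finally show ?thesis .
qed

section \<open>Multiplicativity\<close>

lemma gram_bilinear:
  assumes z: "\<And>x y. x < m \<Longrightarrow> y < m \<Longrightarrow> B $$ (x, y) = (\<Sum>l<k. z l x * cnj (z l y))"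
  shows "(\<Sum>p<m. \<Sum>q<m. cnj (f p) * B $$ (p, q) * g q)
    = (\<Sum>l<k. cnj (\<Sum>q<m. cnj (z l q) * f q) * (\<Sum>q<m. cnj (z l q) * g q))"
proof -
  have "(\<Sum>l<k. cnj (\<Sum>q<m. cnj (z l q) * f q) * (\<Sum>q<m. cnj (z l q) * g q))
      = (\<Sum>l<k. \<Sum>p<m. \<Sum>q<m. cnj (f p) * (z l p * cnj (z l q)) * g q)"
    by (simp add: sum_distrib_left sum_distrib_right mult_ac)
  also have "\<dots> = (\<Sum>p<m. \<Sum>l<k. \<Sum>q<m. cnj (f p) * (z l p * cnj (z l q)) * g q)"
    by (rule sum.swap)
  also have "\<dots> = (\<Sum>p<m. \<Sum>q<m. \<Sum>l<k. cnj (f p) * (z l p * cnj (z l q)) * g q)"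
    by (rule sum.cong[OF refl]) (rule sum.swap)
  also have "\<dots> = (\<Sum>p<m. \<Sum>q<m. cnj (f p) * B $$ (p, q) * g q)"
    using z by (intro sum.cong refl) (simp add: sum_distrib_left sum_distrib_right)
  finally show ?thesis by simp
qed

lemma kron_quad_form_gram:
  assumes z: "\<And>x y. x < m2 \<Longrightarrow> y < m2 \<Longrightarrow> B $$ (x, y) = (\<Sum>l<m2. z l x * cnj (z l y))"
  shows "(\<Sum>p1<m1. \<Sum>p2<m2. \<Sum>q1<m1. \<Sum>q2<m2. cnj (G p1 p2) * A $$ (p1, q1) * B $$ (p2, q2) * G q1 q2)
    = (\<Sum>l<m2. quad_form m1 A (\<lambda>q1. \<Sum>q2<m2. cnj (z l q2) * G q1 q2))"
proof -
  define u where "u l q1 = (\<Sum>q2<m2. cnj (z l q2) * G q1 q2)" for l q1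
  define T where "T p1 q1 = (\<Sum>p2<m2. \<Sum>q2<m2. cnj (G p1 p2) * B $$ (p2, q2) * G q1 q2)" for p1 q1
  have S1: "(\<Sum>p1<m1. \<Sum>p2<m2. \<Sum>q1<m1. \<Sum>q2<m2. cnj (G p1 p2) * A $$ (p1, q1) * B $$ (p2, q2) * G q1 q2)
      = (\<Sum>p1<m1. \<Sum>q1<m1. A $$ (p1, q1) * T p1 q1)"
  proof (rule sum.cong[OF refl])
    fix p1 assume "p1 \<in> {..<m1}"
    have "(\<Sum>p2<m2. \<Sum>q1<m1. \<Sum>q2<m2. cnj (G p1 p2) * A $$ (p1, q1) * B $$ (p2, q2) * G q1 q2)
       = (\<Sum>q1<m1. \<Sum>p2<m2. \<Sum>q2<m2. cnj (G p1 p2) * A $$ (p1, q1) * B $$ (p2, q2) * G q1 q2)"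
      by (rule sum.swap)
    also have "\<dots> = (\<Sum>q1<m1. A $$ (p1, q1) * T p1 q1)"
      unfolding T_def by (simp add: sum_distrib_left mult_ac)
    finally show "(\<Sum>p2<m2. \<Sum>q1<m1. \<Sum>q2<m2. cnj (G p1 p2) * A $$ (p1, q1) * B $$ (p2, q2) * G q1 q2)
       = (\<Sum>q1<m1. A $$ (p1, q1) * T p1 q1)" .
  qed
  have T: "T p1 q1 = (\<Sum>l<m2. cnj (u l p1) * u l q1)" for p1 q1
    unfolding T_def u_def by (rule gram_bilinear[OF z])
  have S2: "(\<Sum>p1<m1. \<Sum>q1<m1. A $$ (p1, q1) * T p1 q1) = (\<Sum>l<m2. quad_form m1 A (u l))"
  proof -
    have "(\<Sum>p1<m1. \<Sum>q1<m1. A $$ (p1, q1) * T p1 q1) = (\<Sum>p1<m1. \<Sum>q1<m1. \<Sum>l<m2. cnj (u l p1) * (A $$ (p1, q1) * u l q1))"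
      unfolding T by (simp add: sum_distrib_left mult_ac)
    also have "\<dots> = (\<Sum>p1<m1. \<Sum>l<m2. \<Sum>q1<m1. cnj (u l p1) * (A $$ (p1, q1) * u l q1))"
      by (rule sum.cong[OF refl]) (rule sum.swap)
    also have "\<dots> = (\<Sum>l<m2. \<Sum>p1<m1. \<Sum>q1<m1. cnj (u l p1) * (A $$ (p1, q1) * u l q1))"
      by (rule sum.swap)
    also have "\<dots> = (\<Sum>l<m2. quad_form m1 A (u l))"
      unfolding quad_form_def by (simp add: sum_distrib_left)
    finally show ?thesis .
  qed
  have "(\<Sum>p1<m1. \<Sum>p2<m2. \<Sum>q1<m1. \<Sum>q2<m2. cnj (G p1 p2) * A $$ (p1, q1) * B $$ (p2, q2) * G q1 q2)
      = (\<Sum>l<m2. quad_form m1 A (u l))"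
    using S1 S2 by (rule trans)
  thus ?thesis unfolding u_def .
qed

lemma quad_form_kron_le:
  fixes A B :: "complex mat" and G :: "nat \<Rightarrow> nat \<Rightarrow> complex"
  assumes Bc: "B \<in> carrier_mat m2 m2" and pB: "psd B" and l1: "lam1 \<ge> 0"
    and hA: "\<And>u. Re (quad_form m1 A u) \<le> lam1 * Re (inner_prod m1 u u)"
    and hB: "\<And>v. Re (quad_form m2 B v) \<le> lam2 * Re (inner_prod m2 v v)"
  shows "Re (\<Sum>p1<m1. \<Sum>p2<m2. \<Sum>q1<m1. \<Sum>q2<m2. cnj (G p1 p2) * A $$ (p1, q1) * B $$ (p2, q2) * G q1 q2)
    \<le> lam1 * lam2 * (\<Sum>p1<m1. \<Sum>p2<m2. (cmod (G p1 p2))\<^sup>2)"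
proof -
  obtain z where z: "\<forall>x<m2. \<forall>y<m2. B $$ (x, y) = (\<Sum>l<m2. z l x * cnj (z l y))"
    using psd_gram[OF pB Bc] by blast
  hence z': "\<And>x y. x < m2 \<Longrightarrow> y < m2 \<Longrightarrow> B $$ (x, y) = (\<Sum>l<m2. z l x * cnj (z l y))" by blast
  define u where "u l q1 = (\<Sum>q2<m2. cnj (z l q2) * G q1 q2)" for l q1
  have "(\<Sum>p1<m1. \<Sum>p2<m2. \<Sum>q1<m1. \<Sum>q2<m2. cnj (G p1 p2) * A $$ (p1, q1) * B $$ (p2, q2) * G q1 q2)
      = (\<Sum>l<m2. quad_form m1 A (u l))"
    unfolding u_def by (rule kron_quad_form_gram[OF z'])
  hence "Re (\<Sum>p1<m1. \<Sum>p2<m2. \<Sum>q1<m1. \<Sum>q2<m2. cnj (G p1 p2) * A $$ (p1, q1) * B $$ (p2, q2) * G q1 q2)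
      = Re (\<Sum>l<m2. quad_form m1 A (u l))" by simp
  also have "\<dots> \<le> (\<Sum>l<m2. lam1 * Re (inner_prod m1 (u l) (u l)))"
    unfolding Re_sum by (intro sum_mono hA)
  also have "\<dots> = lam1 * (\<Sum>q1<m1. \<Sum>l<m2. (cmod (u l q1))\<^sup>2)"
    unfolding inner_prod_self by (simp add: sum_distrib_left sum.swap[of _ "{..<m2}"])
  also have "(\<Sum>q1<m1. \<Sum>l<m2. (cmod (u l q1))\<^sup>2) = (\<Sum>q1<m1. Re (quad_form m2 B (G q1)))"
  proof (rule sum.cong[OF refl])
    fix q1
    have "quad_form m2 B (G q1) = of_real (\<Sum>l<m2. (cmod (\<Sum>y<m2. cnj (z l y) * G q1 y))\<^sup>2)"
      by (rule gram_quad_form) (use z in auto)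
    thus "(\<Sum>l<m2. (cmod (u l q1))\<^sup>2) = Re (quad_form m2 B (G q1))" unfolding u_def by simp
  qed
  also have "lam1 * (\<Sum>q1<m1. Re (quad_form m2 B (G q1))) \<le> lam1 * (\<Sum>q1<m1. lam2 * Re (inner_prod m2 (G q1) (G q1)))"
    by (intro mult_left_mono[OF _ l1] sum_mono hB)
  also have "\<dots> = lam1 * lam2 * (\<Sum>p1<m1. \<Sum>p2<m2. (cmod (G p1 p2))\<^sup>2)"
    unfolding inner_prod_self by (simp add: sum_distrib_left mult_ac)
  finally show ?thesis .
qed

lemma sum_sys_index2:
  fixes F :: "nat \<Rightarrow> nat \<Rightarrow> nat \<Rightarrow> nat \<Rightarrow> 'a::comm_monoid_add"
  shows "(\<Sum>x<(d1 * d2) * (d1 * d2). \<Sum>y<(d1 * d2) * (d1 * d2). F (sys1_index d1 d2 x) (sys2_index d1 d2 x) (sys1_index d1 d2 y) (sys2_index d1 d2 y))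
    = (\<Sum>p1<d1 * d1. \<Sum>p2<d2 * d2. \<Sum>q1<d1 * d1. \<Sum>q2<d2 * d2. F p1 p2 q1 q2)"
proof -
  have "(\<Sum>x<(d1 * d2) * (d1 * d2). \<Sum>y<(d1 * d2) * (d1 * d2). F (sys1_index d1 d2 x) (sys2_index d1 d2 x) (sys1_index d1 d2 y) (sys2_index d1 d2 y))
     = (\<Sum>x<(d1 * d2) * (d1 * d2). \<Sum>q1<d1 * d1. \<Sum>q2<d2 * d2. F (sys1_index d1 d2 x) (sys2_index d1 d2 x) q1 q2)"
    by (rule sum.cong[OF refl]) (rule sum_sys_index)
  also have "\<dots> = (\<Sum>p1<d1 * d1. \<Sum>p2<d2 * d2. \<Sum>q1<d1 * d1. \<Sum>q2<d2 * d2. F p1 p2 q1 q2)"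
    by (rule sum_sys_index)
  finally show ?thesis .
qed

lemma quad_form_dual_maxent_tensor_le:
  assumes Q1: "quantum_channel d1 d1 N1" and Q2: "quantum_channel d2 d2 N2" and d0: "d1 > 0" "d2 > 0"
  shows "Re (quad_form ((d1 * d2) * (d1 * d2)) (dual_maxent (d1 * d2) (tensor_channel d1 d2 N1 N2)) g)
     \<le> (opt_fid d1 N1)\<^sup>2 * (opt_fid d2 N2)\<^sup>2 * Re (inner_prod ((d1 * d2) * (d1 * d2)) g g)"
proof -
  define D where "D = (d1 * d2) * (d1 * d2)"
  define G where "G p1 p2 = g (joint_index d1 d2 p1 p2)" for p1 p2
  have gG: "g x = G (sys1_index d1 d2 x) (sys2_index d1 d2 x)" if "x < D" for x
    unfolding G_def using sys_index_properties(7)[of x d1 d2] that unfolding D_def by simp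
  have L2: "linear_on d2 d2 N2" by (rule quantum_channel_linear_on[OF Q2])
  have "quad_form D (dual_maxent (d1 * d2) (tensor_channel d1 d2 N1 N2)) g =
    (\<Sum>y<D. \<Sum>x<D. cnj (G (sys1_index d1 d2 y) (sys2_index d1 d2 y)) * (dual_maxent d1 N1 $$ (sys1_index d1 d2 y, sys1_index d1 d2 x) * dual_maxent d2 N2 $$ (sys2_index d1 d2 y, sys2_index d1 d2 x) * G (sys1_index d1 d2 x) (sys2_index d1 d2 x)))"
    unfolding quad_form_def sum_distrib_left
    by (intro sum.cong refl) (simp add: gG dual_maxent_tensor_channel[OF L2] D_def)
  also have "\<dots> = (\<Sum>p1<d1 * d1. \<Sum>p2<d2 * d2. \<Sum>q1<d1 * d1. \<Sum>q2<d2 * d2.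
      cnj (G p1 p2) * dual_maxent d1 N1 $$ (p1, q1) * dual_maxent d2 N2 $$ (p2, q2) * G q1 q2)"
    unfolding D_def by (subst sum_sys_index2) (simp add: mult_ac)
  finally have eq: "quad_form D (dual_maxent (d1 * d2) (tensor_channel d1 d2 N1 N2)) g = \<dots>" .
  have ipg: "Re (inner_prod D g g) = (\<Sum>p1<d1 * d1. \<Sum>p2<d2 * d2. (cmod (G p1 p2))\<^sup>2)"
  proof -
    have "Re (inner_prod D g g) = (\<Sum>y<D. (cmod (G (sys1_index d1 d2 y) (sys2_index d1 d2 y)))\<^sup>2)"
      unfolding inner_prod_self by (simp add: gG)
    also have "\<dots> = (\<Sum>p1<d1 * d1. \<Sum>p2<d2 * d2. (cmod (G p1 p2))\<^sup>2)"
      unfolding D_def by (rule sum_sys_index)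
    finally show ?thesis .
  qed
  have "Re (\<Sum>p1<d1 * d1. \<Sum>p2<d2 * d2. \<Sum>q1<d1 * d1. \<Sum>q2<d2 * d2.
      cnj (G p1 p2) * dual_maxent d1 N1 $$ (p1, q1) * dual_maxent d2 N2 $$ (p2, q2) * G q1 q2)
      \<le> (opt_fid d1 N1)\<^sup>2 * (opt_fid d2 N2)\<^sup>2 * (\<Sum>p1<d1 * d1. \<Sum>p2<d2 * d2. (cmod (G p1 p2))\<^sup>2)"
    by (rule quad_form_kron_le[OF dual_maxent_carrier dual_maxent_psd[OF Q2 d0(2)]])
      (auto intro: quad_form_dual_maxent_le[OF Q1 d0(1)] quad_form_dual_maxent_le[OF Q2 d0(2)])
  thus ?thesis unfolding D_def[symmetric] eq ipg .
qed

definition prod_state :: "nat \<Rightarrow> nat \<Rightarrow> complex mat \<Rightarrow> complex mat \<Rightarrow> complex mat" where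
  "prod_state d1 d2 A B = mat ((d1 * d2) * (d1 * d2)) ((d1 * d2) * (d1 * d2))
     (\<lambda>(y, x). A $$ (sys1_index d1 d2 y, sys1_index d1 d2 x) * B $$ (sys2_index d1 d2 y, sys2_index d1 d2 x))"

lemma psd_prod_state:
  assumes "psd \<rho>1" "\<rho>1 \<in> carrier_mat (d1 * d1) (d1 * d1)" "psd \<rho>2" "\<rho>2 \<in> carrier_mat (d2 * d2) (d2 * d2)"
  shows "psd (prod_state d1 d2 \<rho>1 \<rho>2)"
proof -
  define m1 m2 where "m1 = d1 * d1" and "m2 = d2 * d2"
  obtain w1 where w1: "\<forall>x<m1. \<forall>y<m1. \<rho>1 $$ (x, y) = (\<Sum>i<m1. w1 i x * cnj (w1 i y))"
    using psd_gram[OF assms(1,2)] unfolding m1_def by blast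
  obtain w2 where w2: "\<forall>x<m2. \<forall>y<m2. \<rho>2 $$ (x, y) = (\<Sum>i<m2. w2 i x * cnj (w2 i y))"
    using psd_gram[OF assms(3,4)] unfolding m2_def by blast
  define W where "W i y = w1 (i div m2) (sys1_index d1 d2 y) * w2 (i mod m2) (sys2_index d1 d2 y)" for i y
  show ?thesis
  proof (rule gram_psd[where k="m1 * m2" and w=W])
    show "prod_state d1 d2 \<rho>1 \<rho>2 \<in> carrier_mat ((d1 * d2) * (d1 * d2)) ((d1 * d2) * (d1 * d2))"
      unfolding prod_state_def by simp
    fix y x assume yx: "y < (d1 * d2) * (d1 * d2)" "x < (d1 * d2) * (d1 * d2)"
    note py = sys_index_properties[OF yx(1)] and px = sys_index_properties[OF yx(2)]
    have "(\<Sum>i<m1 * m2. W i y * cnj (W i x)) = (\<Sum>i1<m1. \<Sum>i2<m2. W (i1 * m2 + i2) y * cnj (W (i1 * m2 + i2) x))"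
      by (rule sum_mult_split)
    also have "\<dots> = (\<Sum>i1<m1. \<Sum>i2<m2. (w1 i1 (sys1_index d1 d2 y) * cnj (w1 i1 (sys1_index d1 d2 x))) * (w2 i2 (sys2_index d1 d2 y) * cnj (w2 i2 (sys2_index d1 d2 x))))"
      unfolding W_def by (intro sum.cong refl) (simp add: mult_ac)
    also have "\<dots> = (\<Sum>i1<m1. w1 i1 (sys1_index d1 d2 y) * cnj (w1 i1 (sys1_index d1 d2 x))) * (\<Sum>i2<m2. w2 i2 (sys2_index d1 d2 y) * cnj (w2 i2 (sys2_index d1 d2 x)))"
      by (simp add: sum_product)
    also have "\<dots> = prod_state d1 d2 \<rho>1 \<rho>2 $$ (y, x)"
      unfolding prod_state_def using yx py px w1 w2 unfolding m1_def m2_def by simp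
    finally show "prod_state d1 d2 \<rho>1 \<rho>2 $$ (y, x) = (\<Sum>i<m1 * m2. W i y * cnj (W i x))" by simp
  qed
qed

lemma mtrace_prod_state:
  assumes "\<rho>1 \<in> carrier_mat (d1 * d1) (d1 * d1)" "\<rho>2 \<in> carrier_mat (d2 * d2) (d2 * d2)"
  shows "mtrace (prod_state d1 d2 \<rho>1 \<rho>2) = mtrace \<rho>1 * mtrace \<rho>2"
proof -
  have "mtrace (prod_state d1 d2 \<rho>1 \<rho>2) = (\<Sum>y<(d1 * d2) * (d1 * d2). \<rho>1 $$ (sys1_index d1 d2 y, sys1_index d1 d2 y) * \<rho>2 $$ (sys2_index d1 d2 y, sys2_index d1 d2 y))"
    unfolding mtrace_def prod_state_def by simp
  also have "\<dots> = (\<Sum>p1<d1 * d1. \<Sum>p2<d2 * d2. \<rho>1 $$ (p1, p1) * \<rho>2 $$ (p2, p2))"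
    by (rule sum_sys_index)
  also have "\<dots> = (\<Sum>p1<d1 * d1. \<rho>1 $$ (p1, p1)) * (\<Sum>p2<d2 * d2. \<rho>2 $$ (p2, p2))"
    by (simp add: sum_product)
  also have "\<dots> = mtrace \<rho>1 * mtrace \<rho>2"
    using assms unfolding mtrace_def by auto
  finally show ?thesis .
qed

lemma density_prod_state:
  assumes "density (d1 * d1) \<rho>1" "density (d2 * d2) \<rho>2"
  shows "density ((d1 * d2) * (d1 * d2)) (prod_state d1 d2 \<rho>1 \<rho>2)"
proof -
  have "prod_state d1 d2 \<rho>1 \<rho>2 \<in> carrier_mat ((d1 * d2) * (d1 * d2)) ((d1 * d2) * (d1 * d2))"
    unfolding prod_state_def by simp
  thus ?thesis using assms psd_prod_state mtrace_prod_state unfolding density_def by auto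
qed

lemma trace_prod_prod_state:
  assumes L2: "linear_on d2 d2 N2"
  shows "trace_prod ((d1 * d2) * (d1 * d2)) (prod_state d1 d2 \<rho>1 \<rho>2) (dual_maxent (d1 * d2) (tensor_channel d1 d2 N1 N2))
    = trace_prod (d1 * d1) \<rho>1 (dual_maxent d1 N1) * trace_prod (d2 * d2) \<rho>2 (dual_maxent d2 N2)"
proof -
  have "trace_prod ((d1 * d2) * (d1 * d2)) (prod_state d1 d2 \<rho>1 \<rho>2) (dual_maxent (d1 * d2) (tensor_channel d1 d2 N1 N2)) =
     (\<Sum>x<(d1 * d2) * (d1 * d2). \<Sum>y<(d1 * d2) * (d1 * d2).
        (\<rho>1 $$ (sys1_index d1 d2 x, sys1_index d1 d2 y) * dual_maxent d1 N1 $$ (sys1_index d1 d2 y, sys1_index d1 d2 x)) *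
        (\<rho>2 $$ (sys2_index d1 d2 x, sys2_index d1 d2 y) * dual_maxent d2 N2 $$ (sys2_index d1 d2 y, sys2_index d1 d2 x)))"
    unfolding trace_prod_def prod_state_def by (intro sum.cong refl) (simp add: dual_maxent_tensor_channel[OF L2] mult_ac)
  also have "\<dots> = (\<Sum>p1<d1 * d1. \<Sum>p2<d2 * d2. \<Sum>q1<d1 * d1. \<Sum>q2<d2 * d2.
        (\<rho>1 $$ (p1, q1) * dual_maxent d1 N1 $$ (q1, p1)) * (\<rho>2 $$ (p2, q2) * dual_maxent d2 N2 $$ (q2, p2)))"
    by (rule sum_sys_index2)
  also have "\<dots> = trace_prod (d1 * d1) \<rho>1 (dual_maxent d1 N1) * trace_prod (d2 * d2) \<rho>2 (dual_maxent d2 N2)"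
    unfolding trace_prod_def by (simp add: sum_product)
  finally show ?thesis .
qed

lemma cSup_mult_le:
  fixes A B :: "real set"
  assumes A: "A \<noteq> {}" "\<And>x. x \<in> A \<Longrightarrow> 0 \<le> x"
    and B: "B \<noteq> {}" "bdd_above B" "\<And>y. y \<in> B \<Longrightarrow> 0 \<le> y"
    and le: "\<And>x y. x \<in> A \<Longrightarrow> y \<in> B \<Longrightarrow> x * y \<le> c"
  shows "Sup A * Sup B \<le> c"
proof -
  obtain x0 y0 where x0: "x0 \<in> A" and y0: "y0 \<in> B" using A(1) B(1) by blast
  have c0: "0 \<le> c" using le[OF x0 y0] A(2)[OF x0] B(3)[OF y0] by (meson mult_nonneg_nonneg order_trans)
  have SB: "0 \<le> Sup B" using cSup_upper[OF y0 B(2)] B(3)[OF y0] by linarith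
  have xSB: "x * Sup B \<le> c" if x: "x \<in> A" for x
  proof (cases "x = 0")
    case False
    hence xp: "x > 0" using A(2)[OF x] by simp
    have "Sup B \<le> c / x"
      by (rule cSup_least[OF B(1)]) (use le[OF x] xp in \<open>simp add: pos_le_divide_eq mult.commute\<close>)
    thus ?thesis using xp by (simp add: pos_le_divide_eq mult.commute)
  qed (use c0 in simp)
  show ?thesis
  proof (cases "Sup B = 0")
    case False
    hence "Sup A \<le> c / Sup B"
      using SB by (intro cSup_least[OF A(1)]) (simp add: pos_le_divide_eq xSB)
    thus ?thesis using SB False by (simp add: pos_le_divide_eq)
  qed (use c0 in simp)
qed

lemma opt_fid_tensor_le:
  assumes Q1: "quantum_channel d1 d1 N1" and Q2: "quantum_channel d2 d2 N2" and d0: "d1 > 0" "d2 > 0"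
  shows "opt_fid (d1 * d2) (tensor_channel d1 d2 N1 N2) \<le> opt_fid d1 N1 * opt_fid d2 N2"
proof -
  have Q12: "quantum_channel (d1 * d2) (d1 * d2) (tensor_channel d1 d2 N1 N2)"
    by (rule quantum_channel_tensor_channel[OF Q1 Q2])
  have O: "0 \<le> opt_fid d1 N1 * opt_fid d2 N2" using opt_fid_nonneg Q1 Q2 d0 by simp
  have "Sup (fid_values (d1 * d2) (tensor_channel d1 d2 N1 N2)) \<le> opt_fid d1 N1 * opt_fid d2 N2"
  proof (rule cSup_least[OF fid_values_nonempty])
    fix x assume "x \<in> fid_values (d1 * d2) (tensor_channel d1 d2 N1 N2)"
    then obtain \<rho> where \<rho>: "density ((d1 * d2) * (d1 * d2)) \<rho>"
      and x: "x = sqrt (Re (trace_prod ((d1 * d2) * (d1 * d2)) \<rho> (dual_maxent (d1 * d2) (tensor_channel d1 d2 N1 N2))))"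
      unfolding fid_values_def by blast
    have "Re (trace_prod ((d1 * d2) * (d1 * d2)) \<rho> (dual_maxent (d1 * d2) (tensor_channel d1 d2 N1 N2)))
        \<le> (opt_fid d1 N1 * opt_fid d2 N2)\<^sup>2"
      using quad_form_dual_maxent_tensor_le[OF Q1 Q2 d0]
      by (intro trace_prod_density_le[OF \<rho>]) (simp add: power_mult_distrib)
    hence "x \<le> sqrt ((opt_fid d1 N1 * opt_fid d2 N2)\<^sup>2)" unfolding x by (rule real_sqrt_le_mono)
    thus "x \<le> opt_fid d1 N1 * opt_fid d2 N2" using O by simp
  qed (use d0 in simp)
  thus ?thesis using opt_fid_eq_Sup[OF Q12] d0 by simp
qed

lemma opt_fid_tensor_ge:
  assumes Q1: "quantum_channel d1 d1 N1" and Q2: "quantum_channel d2 d2 N2" and d0: "d1 > 0" "d2 > 0"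
  shows "opt_fid d1 N1 * opt_fid d2 N2 \<le> opt_fid (d1 * d2) (tensor_channel d1 d2 N1 N2)"
  unfolding opt_fid_eq_Sup[OF Q1 d0(1)] opt_fid_eq_Sup[OF Q2 d0(2)]
proof (rule cSup_mult_le[OF fid_values_nonempty _ fid_values_nonempty bdd_above_fid_values])
  fix x y assume "x \<in> fid_values d1 N1" "y \<in> fid_values d2 N2"
  then obtain \<rho>1 \<rho>2 where \<rho>: "density (d1 * d1) \<rho>1" "density (d2 * d2) \<rho>2"
    and xy: "x = sqrt (Re (trace_prod (d1 * d1) \<rho>1 (dual_maxent d1 N1)))"
      "y = sqrt (Re (trace_prod (d2 * d2) \<rho>2 (dual_maxent d2 N2)))"
    unfolding fid_values_def by blast
  note t1 = trace_prod_density_psd[OF \<rho>(1) dual_maxent_psd[OF Q1 d0(1)] dual_maxent_carrier]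
  note t2 = trace_prod_density_psd[OF \<rho>(2) dual_maxent_psd[OF Q2 d0(2)] dual_maxent_carrier]
  have "x * y = sqrt (Re (trace_prod ((d1 * d2) * (d1 * d2)) (prod_state d1 d2 \<rho>1 \<rho>2)
      (dual_maxent (d1 * d2) (tensor_channel d1 d2 N1 N2))))"
    using \<rho> t1 t2 unfolding xy density_def
    by (simp add: trace_prod_prod_state[OF quantum_channel_linear_on[OF Q2]] real_sqrt_mult)
  also have "\<dots> \<le> opt_fid (d1 * d2) (tensor_channel d1 d2 N1 N2)"
    using d0 by (intro fid_value_le_opt_fid quantum_channel_tensor_channel[OF Q1 Q2] density_prod_state \<rho>) simp
  finally show "x * y \<le> opt_fid (d1 * d2) (tensor_channel d1 d2 N1 N2)" .
qed (use fid_values_nonneg Q1 Q2 d0 in auto)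

theorem theorem2:
  fixes N1 N2 :: "complex mat \<Rightarrow> complex mat" and d1 d2 :: nat
  assumes "0 < d1" and "0 < d2"
    and "quantum_channel d1 d1 N1" and "quantum_channel d2 d2 N2"
  shows "opt_fid (d1 * d2) (tensor_channel d1 d2 N1 N2) = opt_fid d1 N1 * opt_fid d2 N2"
  using opt_fid_tensor_le[OF assms(3,4,1,2)] opt_fid_tensor_ge[OF assms(3,4,1,2)] by (rule antisym)

end
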